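(* Let $\ell$ be a positive integer. For $n\ge 1$ define the modified Nörlund polynomials $$B_n^{(\ell)*}=\sum_{r=0}^{n}\binom{n+r}{2r}\frac{B_r^{(\ell)}}{n+r},$$ where $B_r^{(\ell)}$ are the Nörlund polynomials given by $\sum_{r\ge0}B_r^{(\ell)}\frac{z^r}{r!}=\left(\frac{z}{e^z-1}\right)^{\ell}$. Then the generating function $F_{B^*}(z;\ell)=\sum_{n=1}^{\infty}B_n^{(\ell)*}z^n$, viewed as a formal power series in $z$ (with the right-hand side below understood through its expansion as $z\to0^+$), is given by $$F_{B^*}(z;\ell) = -\frac12\log z + \frac12\left[H_{\ell-1} - \frac{d^{\ell-1}}{dx^{\ell-1}}\left\{\binom{x-1}{\ell-1}\psi\!\left(x-\left\lfloor\tfrac{\ell}{2}\right\rfloor\right)\right\}\right]\Bigg|_{x=z+1/z+\ell-2}.$$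
   Context: $H_n$ is the $n$-th harmonic number ($H_0=0$), $\psi=\Gamma'/\Gamma$ is the digamma function, and $\binom{x}{n}=\frac{x(x-1)\cdots(x-n+1)}{n!}$ is the generalized binomial coefficient. *)

theory Defs
  imports "HOL-Analysis.Analysis" "HOL-Computational_Algebra.Formal_Power_Series"
    "HOL-Library.Landau_Symbols"
begin

text \<open>Here z/(e^z-1) is the inverse of
  the power series (e^z-1)/z = fps_shift 1 (E - 1), which has constant term 1.\<close>
definition norlund :: "nat \<Rightarrow> nat \<Rightarrow> real" where
  "norlund l r = fact r * fps_nth ((inverse (fps_shift 1 (fps_exp 1 - 1))) ^ l) r"

definition norlund_star :: "nat \<Rightarrow> nat \<Rightarrow> real" where
  "norlund_star l n = (\<Sum>r=0..n. real ((n + r) choose (2 * r)) * norlund l r / real (n + r))"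

definition rhs_fun :: "nat \<Rightarrow> real \<Rightarrow> real" where
  "rhs_fun l z = - ln z / 2 + (harm (l - 1)
     - (deriv ^^ (l - 1)) (\<lambda>x. ((x - 1) gchoose (l - 1)) * Digamma (x - real (l div 2)))
         (z + 1 / z + real l - 2)) / 2"

end

theory Submission
  imports Defs "HOL-Computational_Algebra.Polynomial_FPS"
begin

text \<open>Write \<open>x = 1/t + l\<close> and \<open>D\<^sub>l(x) = binom(x-1, l-1) \<psi>(x)\<close>. The shift \<open>x \<mapsto> x + 1\<close> is
  \<open>t \<mapsto> t/(1+t)\<close>, which acts on formal Laplace transforms \<open>L g = \<Sum> n! g\<^sub>n t\<^sup>n\<^sup>+\<^sup>1\<close> by multiplying
  \<open>g\<close> with \<open>e\<^sup>-\<^sup>u\<close>. Since an asymptotic expansion at \<open>0\<^sup>+\<close> of a function tending to \<open>0\<close> is determined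
  by its behaviour under this shift, the difference equation of the polygamma functions gives
  \<open>\<psi>\<^sup>(\<^sup>i\<^sup>+\<^sup>1\<^sup>)(1/t + 1) ~ L((-u)\<^sup>i \<beta>(u))\<close> with \<open>\<beta>(u) = u/(e\<^sup>u - 1)\<close>. The recursion
  \<open>binom(x-1, k+1) = (x-k-1)/(k+1) binom(x-1, k)\<close> and the identity \<open>\<beta> - u \<beta>' = \<beta>\<^sup>2 e\<^sup>u\<close> lift this to
  \<open>D\<^sub>k\<^sub>+\<^sub>1\<^sup>(\<^sup>k\<^sup>+\<^sup>i\<^sup>+\<^sup>1\<^sup>)(1/t + k + 1) ~ L((-u)\<^sup>i \<beta>(u)\<^sup>k\<^sup>+\<^sup>1)\<close>. Integrating the case \<open>i = 0\<close> once,
  with the constant \<open>H\<^sub>k\<close> coming from \<open>\<psi>(x) - ln x \<longrightarrow> 0\<close>, expands \<open>D\<^sub>k\<^sub>+\<^sub>1\<^sup>(\<^sup>k\<^sup>)(1/t + k + 1) + ln t\<close>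
  with coefficients \<open>-B\<^sub>n\<^sup>(\<^sup>k\<^sup>+\<^sup>1\<^sup>)/n\<close>. Replacing \<open>\<psi>(x)\<close> by \<open>\<psi>(x - \<lfloor>l/2\<rfloor>)\<close> changes \<open>D\<^sub>l\<close> only by a
  polynomial of degree \<open>< l - 1\<close>, and substituting \<open>t = z/(1-z)\<^sup>2\<close> turns these coefficients
  into the \<open>B\<^sub>n\<^sup>(\<^sup>l\<^sup>)\<^sup>*\<close>.\<close>

section \<open>Asymptotic power series expansions at \<open>0\<^sup>+\<close>\<close>

definition has_asymp_expansion :: "(real \<Rightarrow> real) \<Rightarrow> real fps \<Rightarrow> bool" where
  "has_asymp_expansion f F \<longleftrightarrow>
     (\<forall>K. (\<lambda>t. f t - poly (truncate_fps (Suc K) F) t) \<in> O[at_right 0](\<lambda>t. t ^ Suc K))"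

lemma truncate_fps_Suc_eq_sum_monom:
  fixes F :: "'a::comm_semiring_1 fps"
  shows "truncate_fps (Suc K) F = (\<Sum>i\<le>K. monom (fps_nth F i) i)"
  by (rule poly_eqI) (simp add: coeff_sum coeff_truncate_fps)

lemma poly_truncate_fps:
  fixes F :: "'a::comm_semiring_1 fps"
  shows "poly (truncate_fps (Suc K) F) t = (\<Sum>i\<le>K. fps_nth F i * t ^ i)"
  by (simp add: truncate_fps_Suc_eq_sum_monom poly_sum poly_monom)

lemma bigo_1_if_tendsto: "(f \<longlongrightarrow> (c::real)) F \<Longrightarrow> f \<in> O[F](\<lambda>_. 1)"
  by (rule bigoI_tendsto[where c=c]) auto

lemma poly_bigo_1: "(\<lambda>t. poly p (t::real)) \<in> O[at_right 0](\<lambda>_. 1)"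
  by (rule bigo_1_if_tendsto[of _ "poly p 0"]) (intro tendsto_intros)

lemma power_bigo_power_at_right_0:
  assumes "m \<le> n" shows "(\<lambda>t::real. t ^ n) \<in> O[at_right 0](\<lambda>t. t ^ m)"
proof -
  obtain k where n: "n = m + k" using assms by (metis le_add_diff_inverse)
  have "(\<lambda>t::real. t ^ k) \<in> O[at_right 0](\<lambda>_. 1)"
    by (rule bigo_1_if_tendsto[of _ "0^k"]) (intro tendsto_intros)
  hence "(\<lambda>t::real. t ^ m * t ^ k) \<in> O[at_right 0](\<lambda>t. t ^ m * 1)"
    by (rule landau_o.big.mult_left)
  thus ?thesis by (simp add: n power_add)
qed

lemma poly_bigo_power_if_low_coeffs_zero:
  assumes "\<forall>n\<le>K. coeff p n = (0::real)"
  shows "(\<lambda>t. poly p t) \<in> O[at_right 0](\<lambda>t. t ^ Suc K)"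
proof -
  have "monom 1 (Suc K) dvd p" using assms by (auto simp: monom_1_dvd_iff')
  then obtain q where q: "p = monom 1 (Suc K) * q" by (elim dvdE)
  have "(\<lambda>t. t ^ Suc K * poly q t) \<in> O[at_right 0](\<lambda>t. t ^ Suc K * 1)"
    by (rule landau_o.big.mult_left[OF poly_bigo_1])
  thus ?thesis by (simp add: q poly_monom)
qed

lemma bigo_power_diff_poly_transfer:
  fixes f :: "real \<Rightarrow> real"
  assumes "\<forall>n\<le>K. coeff p n = coeff q n"
    and "(\<lambda>t. f t - poly p t) \<in> O[at_right 0](\<lambda>t. t ^ Suc K)"
  shows "(\<lambda>t. f t - poly q t) \<in> O[at_right 0](\<lambda>t. t ^ Suc K)"
proof -
  have "(\<lambda>t. poly (p - q) t) \<in> O[at_right 0](\<lambda>t. t ^ Suc K)"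
    using assms(1) by (intro poly_bigo_power_if_low_coeffs_zero) simp
  from sum_in_bigo(1)[OF assms(2) this] show ?thesis by (simp add: poly_diff)
qed

lemma has_asymp_expansionI:
  assumes "\<And>K. \<exists>p. (\<forall>n\<le>K. coeff p n = fps_nth F n) \<and>
                     (\<lambda>t. f t - poly p t) \<in> O[at_right 0](\<lambda>t. t ^ Suc K)"
  shows "has_asymp_expansion f F"
  unfolding has_asymp_expansion_def
proof
  fix K
  obtain p where p: "\<forall>n\<le>K. coeff p n = fps_nth F n"
      "(\<lambda>t. f t - poly p t) \<in> O[at_right 0](\<lambda>t. t ^ Suc K)"
    using assms[of K] by blast
  have "\<forall>n\<le>K. coeff p n = coeff (truncate_fps (Suc K) F) n"
    using p(1) by (simp add: coeff_truncate_fps)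
  from bigo_power_diff_poly_transfer[OF this p(2)]
  show "(\<lambda>t. f t - poly (truncate_fps (Suc K) F) t) \<in> O[at_right 0](\<lambda>t. t ^ Suc K)" .
qed

lemma has_asymp_expansionD:
  assumes "has_asymp_expansion f F" "\<forall>n\<le>K. coeff p n = fps_nth F n"
  shows "(\<lambda>t. f t - poly p t) \<in> O[at_right 0](\<lambda>t. t ^ Suc K)"
proof -
  have "\<forall>n\<le>K. coeff (truncate_fps (Suc K) F) n = coeff p n"
    using assms(2) by (simp add: coeff_truncate_fps)
  from bigo_power_diff_poly_transfer[OF this] assms(1) show ?thesis
    unfolding has_asymp_expansion_def by blast
qed

lemma has_asymp_expansionD_truncate:
  "has_asymp_expansion f F \<Longrightarrow> (\<lambda>t. f t - poly (truncate_fps (Suc K) F) t) \<in> O[at_right 0](\<lambda>t. t ^ Suc K)"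
  unfolding has_asymp_expansion_def by blast

lemma has_asymp_expansion_cong:
  assumes "has_asymp_expansion f F" "eventually (\<lambda>t. f t = g t) (at_right 0)"
  shows "has_asymp_expansion g F"
  unfolding has_asymp_expansion_def
proof
  fix K
  have "eventually (\<lambda>t. f t - poly (truncate_fps (Suc K) F) t = g t - poly (truncate_fps (Suc K) F) t) (at_right 0)"
    using assms(2) by eventually_elim simp
  with has_asymp_expansionD_truncate[OF assms(1), of K]
  show "(\<lambda>t. g t - poly (truncate_fps (Suc K) F) t) \<in> O[at_right 0](\<lambda>t. t ^ Suc K)"
    by (subst (asm) landau_o.big.in_cong)
qed

lemma has_asymp_expansion_poly: "has_asymp_expansion (\<lambda>t. poly q t) (fps_of_poly q)"
  by (rule has_asymp_expansionI) (auto intro!: exI[of _ q])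

lemma has_asymp_expansion_const: "has_asymp_expansion (\<lambda>_. c) (fps_const c)"
  using has_asymp_expansion_poly[of "[:c:]"] by (simp add: fps_of_poly_pCons)

lemma has_asymp_expansion_ident: "has_asymp_expansion (\<lambda>t. t) fps_X"
  using has_asymp_expansion_poly[of "[:0,1:]"] by (simp add: fps_of_poly_pCons)

lemma has_asymp_expansion_add:
  assumes "has_asymp_expansion f F" "has_asymp_expansion g G"
  shows "has_asymp_expansion (\<lambda>t. f t + g t) (F + G)"
  unfolding has_asymp_expansion_def
proof
  fix K
  have "(\<lambda>t. (f t - poly (truncate_fps (Suc K) F) t) + (g t - poly (truncate_fps (Suc K) G) t))
          \<in> O[at_right 0](\<lambda>t. t ^ Suc K)"
    by (intro sum_in_bigo has_asymp_expansionD_truncate assms)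
  thus "(\<lambda>t. f t + g t - poly (truncate_fps (Suc K) (F + G)) t) \<in> O[at_right 0](\<lambda>t. t ^ Suc K)"
    by (simp add: truncate_fps_add poly_add algebra_simps)
qed

lemma has_asymp_expansion_uminus:
  assumes "has_asymp_expansion f F" shows "has_asymp_expansion (\<lambda>t. - f t) (- F)"
  using assms unfolding has_asymp_expansion_def
  by (subst (asm) landau_o.big.uminus_in_iff[symmetric]) (simp add: truncate_fps_uminus)

lemma has_asymp_expansion_diff:
  "has_asymp_expansion f F \<Longrightarrow> has_asymp_expansion g G \<Longrightarrow> has_asymp_expansion (\<lambda>t. f t - g t) (F - G)"
  using has_asymp_expansion_add[of f F "\<lambda>t. - g t" "- G"] has_asymp_expansion_uminus[of g G] by simp

lemma has_asymp_expansion_tendsto: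
  assumes "has_asymp_expansion f F" shows "(f \<longlongrightarrow> fps_nth F 0) (at_right 0)"
proof -
  have "(\<lambda>t. f t - fps_nth F 0) \<in> O[at_right 0](\<lambda>t. t)"
    using has_asymp_expansionD_truncate[OF assms, of 0] by (simp add: poly_truncate_fps)
  also have "(\<lambda>t::real. t) \<in> o[at_right 0](\<lambda>_. 1)"
    by (rule smalloI_tendsto) (auto intro!: tendsto_eq_intros)
  finally have "((\<lambda>t. f t - fps_nth F 0) \<longlongrightarrow> 0) (at_right 0)"
    using smalloD_tendsto by force
  thus ?thesis by (simp add: LIM_zero_iff)
qed

lemma has_asymp_expansion_bigo_1:
  "has_asymp_expansion f F \<Longrightarrow> f \<in> O[at_right 0](\<lambda>_. 1)"
  by (rule bigo_1_if_tendsto) (rule has_asymp_expansion_tendsto)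

lemma has_asymp_expansion_mult:
  assumes "has_asymp_expansion f F" "has_asymp_expansion g G"
  shows "has_asymp_expansion (\<lambda>t. f t * g t) (F * G)"
proof (rule has_asymp_expansionI)
  fix K
  let ?P = "truncate_fps (Suc K) F" and ?Q = "truncate_fps (Suc K) G"
  have "(\<lambda>t. (f t - poly ?P t) * g t + (g t - poly ?Q t) * poly ?P t) \<in> O[at_right 0](\<lambda>t. t ^ Suc K)"
    by (rule sum_in_bigo(1)[OF
          landau_o.big_1_mult[OF has_asymp_expansionD_truncate[OF assms(1)] has_asymp_expansion_bigo_1[OF assms(2)]]
          landau_o.big_1_mult[OF has_asymp_expansionD_truncate[OF assms(2)] poly_bigo_1]])
  moreover have "(\<lambda>t. f t * g t - poly (?P * ?Q) t) = (\<lambda>t. (f t - poly ?P t) * g t + (g t - poly ?Q t) * poly ?P t)"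
    by (simp add: fun_eq_iff algebra_simps)
  moreover have "\<forall>n\<le>K. coeff (?P * ?Q) n = fps_nth (F * G) n"
    by (auto simp: coeff_mult fps_mult_nth coeff_truncate_fps atLeast0AtMost intro!: sum.cong)
  ultimately show "\<exists>p. (\<forall>n\<le>K. coeff p n = fps_nth (F * G) n) \<and>
                       (\<lambda>t. f t * g t - poly p t) \<in> O[at_right 0](\<lambda>t. t ^ Suc K)"
    by (intro exI[of _ "?P * ?Q"]) simp
qed

lemma has_asymp_expansion_cmult:
  "has_asymp_expansion f F \<Longrightarrow> has_asymp_expansion (\<lambda>t. c * f t) (fps_const c * F)"
  by (rule has_asymp_expansion_mult[OF has_asymp_expansion_const])

lemma has_asymp_expansion_power:
  "has_asymp_expansion f F \<Longrightarrow> has_asymp_expansion (\<lambda>t. f t ^ n) (F ^ n)"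
  by (induction n) (auto intro: has_asymp_expansion_mult simp: has_asymp_expansion_const[of 1, simplified])

lemma has_asymp_expansion_sum:
  "(\<And>i. i \<in> A \<Longrightarrow> has_asymp_expansion (f i) (F i)) \<Longrightarrow>
     has_asymp_expansion (\<lambda>t. \<Sum>i\<in>A. f i t) (\<Sum>i\<in>A. F i)"
  by (induction A rule: infinite_finite_induct)
     (auto intro: has_asymp_expansion_add simp: has_asymp_expansion_const[of 0, simplified])

lemma has_asymp_expansion_inverse:
  assumes "has_asymp_expansion f F" "fps_nth F 0 \<noteq> 0"
  shows "has_asymp_expansion (\<lambda>t. inverse (f t)) (inverse F)"
  unfolding has_asymp_expansion_def
proof
  fix K
  let ?Q = "truncate_fps (Suc K) (inverse F)"
  have lim: "(f \<longlongrightarrow> fps_nth F 0) (at_right 0)" by (rule has_asymp_expansion_tendsto[OF assms(1)])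
  have "\<forall>n\<le>K. coeff 1 n = fps_nth (F * fps_of_poly ?Q) n"
  proof (intro allI impI)
    fix n assume "n \<le> K"
    hence "fps_nth (F * fps_of_poly ?Q) n = fps_nth (F * inverse F) n"
      by (auto simp: fps_mult_nth coeff_truncate_fps intro!: sum.cong)
    thus "coeff 1 n = fps_nth (F * fps_of_poly ?Q) n"
      using assms(2) by (simp add: coeff_1 inverse_mult_eq_1')
  qed
  from has_asymp_expansionD[OF has_asymp_expansion_mult[OF assms(1) has_asymp_expansion_poly] this]
  have "(\<lambda>t. f t * poly ?Q t - poly 1 t) \<in> O[at_right 0](\<lambda>t. t ^ Suc K)" .
  hence "(\<lambda>t. - ((f t * poly ?Q t - poly 1 t) * inverse (f t))) \<in> O[at_right 0](\<lambda>t. t ^ Suc K)"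
    using landau_o.big_1_mult[OF _ bigo_1_if_tendsto[OF tendsto_inverse[OF lim assms(2)]]] by simp
  moreover have "eventually (\<lambda>t. - ((f t * poly ?Q t - poly 1 t) * inverse (f t)) = inverse (f t) - poly ?Q t)
                   (at_right 0)"
    using tendsto_imp_eventually_ne[OF lim assms(2)] by eventually_elim (simp add: field_simps)
  ultimately show "(\<lambda>t. inverse (f t) - poly ?Q t) \<in> O[at_right 0](\<lambda>t. t ^ Suc K)"
    by (subst (asm) landau_o.big.in_cong)
qed

lemma has_asymp_expansion_divide_ident:
  assumes "has_asymp_expansion f F" "fps_nth F 0 = 0"
  shows "has_asymp_expansion (\<lambda>t. f t / t) (fps_shift 1 F)"
  unfolding has_asymp_expansion_def
proof
  fix K
  let ?q = "truncate_fps (Suc K) (fps_shift 1 F)"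
  have "\<forall>n\<le>Suc K. coeff (pCons 0 ?q) n = fps_nth F n"
    using assms(2) by (auto simp: coeff_pCons coeff_truncate_fps split: nat.splits)
  from has_asymp_expansionD[OF assms(1) this]
  have "(\<lambda>t. inverse t * (f t - poly (pCons 0 ?q) t)) \<in> O[at_right 0](\<lambda>t. inverse t * t ^ Suc (Suc K))"
    by (rule landau_o.big.mult_left)
  moreover have "eventually (\<lambda>t::real. inverse t * t ^ Suc (Suc K) = t ^ Suc K) (at_right 0)"
    using eventually_at_right_less[of 0] by eventually_elim simp
  moreover have "eventually (\<lambda>t. inverse t * (f t - poly (pCons 0 ?q) t) = f t / t - poly ?q t) (at_right 0)"
    using eventually_at_right_less[of 0] by eventually_elim (simp add: field_simps)
  ultimately show "(\<lambda>t. f t / t - poly ?q t) \<in> O[at_right 0](\<lambda>t. t ^ Suc K)"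
    by (simp only: landau_o.big.in_cong landau_o.big.cong)
qed

lemma has_asymp_expansion_compose:
  assumes g: "has_asymp_expansion g G" and y: "has_asymp_expansion y Y" "fps_nth Y 0 = 0"
    and lim: "filterlim y (at_right 0) (at_right 0)"
  shows "has_asymp_expansion (\<lambda>t. g (y t)) (G oo Y)"
  unfolding has_asymp_expansion_def
proof
  fix K
  let ?P = "truncate_fps (Suc K) G" and ?R = "truncate_fps (Suc K) (G oo Y)"
  define H where "H = (\<Sum>r\<le>K. fps_const (fps_nth G r) * Y ^ r)"
  have "has_asymp_expansion (\<lambda>t. \<Sum>r\<le>K. fps_nth G r * y t ^ r) H" unfolding H_def
    by (intro has_asymp_expansion_sum has_asymp_expansion_cmult has_asymp_expansion_power y)
  moreover have coeffs: "\<forall>n\<le>K. coeff ?R n = fps_nth H n"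
  proof (intro allI impI)
    fix n assume n: "n \<le> K"
    have "fps_nth H n = (\<Sum>r\<le>K. fps_nth G r * fps_nth (Y^r) n)" by (simp add: H_def fps_sum_nth)
    also have "\<dots> = (\<Sum>r\<le>n. fps_nth G r * fps_nth (Y^r) n)"
      using n startsby_zero_power_prefix[OF y(2)] by (intro sum.mono_neutral_right) auto
    also have "\<dots> = coeff ?R n" using n by (simp add: fps_compose_nth atLeast0AtMost coeff_truncate_fps)
    finally show "coeff ?R n = fps_nth H n" ..
  qed
  ultimately have "(\<lambda>t. (\<Sum>r\<le>K. fps_nth G r * y t ^ r) - poly ?R t) \<in> O[at_right 0](\<lambda>t. t ^ Suc K)"
    by (rule has_asymp_expansionD)
  hence inner: "(\<lambda>t. poly ?P (y t) - poly ?R t) \<in> O[at_right 0](\<lambda>t. t ^ Suc K)"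
    by (simp only: poly_truncate_fps)
  have "y \<in> O[at_right 0](\<lambda>t. t)"
    using has_asymp_expansionD_truncate[OF y(1), of 0] y(2) by (simp add: poly_truncate_fps)
  hence "(\<lambda>t. y t ^ Suc K) \<in> O[at_right 0](\<lambda>t. t ^ Suc K)" by (rule landau_o.big_power)
  with landau_o.big.compose[OF has_asymp_expansionD_truncate[OF g] lim]
  have outer: "(\<lambda>t. g (y t) - poly ?P (y t)) \<in> O[at_right 0](\<lambda>t. t ^ Suc K)"
    by (rule landau_o.big.trans)
  from sum_in_bigo(1)[OF outer inner]
  show "(\<lambda>t. g (y t) - poly ?R t) \<in> O[at_right 0](\<lambda>t. t ^ Suc K)" by simp
qed

lemma bigo_power_Suc_if_deriv_bigo_power:
  fixes k :: "real \<Rightarrow> real"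
  assumes der: "\<And>t. 0 < t \<Longrightarrow> t < \<delta> \<Longrightarrow> (k has_real_derivative k' t) (at t)" and "\<delta> > 0"
    and lim: "(k \<longlongrightarrow> 0) (at_right 0)" and d: "k' \<in> O[at_right 0](\<lambda>t. t ^ K)"
  shows "k \<in> O[at_right 0](\<lambda>t. t ^ Suc K)"
proof -
  obtain C where C: "C > 0" "eventually (\<lambda>t. norm (k' t) \<le> C * norm (t ^ K)) (at_right 0)"
    using landau_o.bigE[OF d] by blast
  then obtain \<epsilon> where \<epsilon>: "\<epsilon> > 0" "\<And>t. 0 < t \<Longrightarrow> t < \<epsilon> \<Longrightarrow> \<bar>k' t\<bar> \<le> C * t ^ K"
    by (auto simp: eventually_at_right_field abs_mult)
  have main: "\<bar>k t\<bar> \<le> C * \<bar>t ^ Suc K\<bar>" if t: "0 < t" "t < \<epsilon>" "t < \<delta>" for t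
  proof -
    have bound: "\<bar>k t - k s\<bar> \<le> C * t ^ Suc K" if s: "0 < s" "s < t" for s
    proof -
      obtain z where z: "s < z" "z < t" "k t - k s = (t - s) * k' z"
        using MVT2[OF s(2), of k k'] der t s by force
      have "\<bar>k' z\<bar> \<le> C * z ^ K" using \<epsilon>(2)[of z] z s t by simp
      also have "\<dots> \<le> C * t ^ K" using z s C(1) by (intro mult_left_mono power_mono) auto
      finally have "\<bar>k' z\<bar> \<le> C * t ^ K" .
      hence "\<bar>k t - k s\<bar> \<le> (t - s) * (C * t ^ K)"
        using z s by (simp add: abs_mult mult_left_mono)
      also have "\<dots> \<le> t * (C * t ^ K)" using s C(1) t by (intro mult_right_mono) auto
      finally show ?thesis by (simp add: algebra_simps)
    qed
    have "eventually (\<lambda>s. \<bar>k t - k s\<bar> \<le> C * t ^ Suc K) (at_right 0)"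
      using t bound by (auto simp: eventually_at_right_field intro!: exI[of _ t])
    moreover have "((\<lambda>s. \<bar>k t - k s\<bar>) \<longlongrightarrow> \<bar>k t - 0\<bar>) (at_right 0)"
      by (intro tendsto_intros lim)
    ultimately have "\<bar>k t - 0\<bar> \<le> C * t ^ Suc K"
      by (intro tendsto_upperbound) auto
    thus ?thesis using t by simp
  qed
  have "eventually (\<lambda>t::real. 0 < t \<and> t < \<epsilon> \<and> t < \<delta>) (at_right 0)"
    using \<epsilon>(1) assms(2) by (auto simp: eventually_at_right_field intro!: exI[of _ "min \<epsilon> \<delta>"])
  hence "eventually (\<lambda>t. norm (k t) \<le> C * norm (t ^ Suc K)) (at_right 0)"
    by eventually_elim (use main in auto)
  thus ?thesis by (rule bigoI)
qed

lemma has_asymp_expansion_integral: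
  assumes der: "\<And>t. 0 < t \<Longrightarrow> t < \<delta> \<Longrightarrow> (k has_real_derivative k' t) (at t)" and "\<delta> > 0"
    and lim: "(k \<longlongrightarrow> c) (at_right 0)" and k': "has_asymp_expansion k' F"
  shows "has_asymp_expansion k (fps_integral F c)"
proof (rule has_asymp_expansionI)
  fix K
  let ?p = "truncate_fps (Suc (Suc K)) (fps_integral F c)"
  have pderiv_p: "pderiv ?p = truncate_fps (Suc K) F"
    by (rule poly_eqI) (simp add: coeff_pderiv coeff_truncate_fps del: of_nat_Suc)
  define r where "r t = k t - poly ?p t" for t
  have "(r has_real_derivative (k' t - poly (truncate_fps (Suc K) F) t)) (at t)" if "0 < t" "t < \<delta>" for t
    unfolding r_def pderiv_p[symmetric] by (intro DERIV_diff der that poly_DERIV)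
  moreover have "poly ?p 0 = c" by (simp add: poly_0_coeff_0 coeff_truncate_fps)
  hence "(r \<longlongrightarrow> 0) (at_right 0)"
    unfolding r_def using tendsto_diff[OF lim tendsto_poly[OF tendsto_ident_at, of ?p 0 "{0<..}"]] by simp
  moreover have "(\<lambda>t. k' t - poly (truncate_fps (Suc K) F) t) \<in> O[at_right 0](\<lambda>t. t ^ K)"
    using has_asymp_expansionD_truncate[OF k'] power_bigo_power_at_right_0[of K "Suc K"]
    by (rule landau_o.big.trans) simp
  ultimately have "r \<in> O[at_right 0](\<lambda>t. t ^ Suc K)"
    by (rule bigo_power_Suc_if_deriv_bigo_power[OF _ \<open>\<delta> > 0\<close>])
  thus "\<exists>p. (\<forall>n\<le>K. coeff p n = fps_nth (fps_integral F c) n) \<and>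
          (\<lambda>t. k t - poly p t) \<in> O[at_right 0](\<lambda>t. t ^ Suc K)"
    by (intro exI[of _ ?p]) (auto simp: coeff_truncate_fps r_def[abs_def])
qed

lemma sum_inverse_square_le:
  fixes a :: real assumes "a > 1"
  shows "(\<Sum>k<n. 1 / (a + real k)^2) \<le> 1 / (a - 1) - 1 / (a + real n - 1)"
proof (induction n)
  case (Suc n)
  have pos: "a + real n - 1 > 0" using assms by auto
  have "1 / (a + real n)^2 \<le> 1 / ((a + real n - 1) * (a + real n))"
    using pos by (intro divide_left_mono) (auto simp: power2_eq_square)
  also have "\<dots> = 1 / (a + real n - 1) - 1 / (a + real n)"
    using pos by (simp add: field_simps)
  finally show ?case using Suc by (simp add: algebra_simps)
qed simp

text \<open>In the variable \<open>x = 1/t\<close>, the map \<open>t \<mapsto> t / (1 + t)\<close> is the translation \<open>x \<mapsto> x + 1\<close>.\<close>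

definition recip_succ :: "real \<Rightarrow> real" where
  "recip_succ t = t / (1 + t)"

definition recip_succ_fps :: "real fps" where
  "recip_succ_fps = fps_X * inverse (1 + fps_X)"

lemma recip_succ_pos: "t > 0 \<Longrightarrow> recip_succ t > 0"
  by (simp add: recip_succ_def)

lemma inverse_recip_succ: "t > 0 \<Longrightarrow> 1 / recip_succ t = 1 / t + 1"
  by (simp add: recip_succ_def field_simps)

lemma has_asymp_expansion_recip_succ: "has_asymp_expansion recip_succ recip_succ_fps"
proof -
  have "has_asymp_expansion (\<lambda>t. t * inverse (1 + t)) (fps_X * inverse (fps_const 1 + fps_X))"
    by (intro has_asymp_expansion_mult has_asymp_expansion_ident has_asymp_expansion_inverse
        has_asymp_expansion_add has_asymp_expansion_const) simp
  thus ?thesis unfolding recip_succ_def recip_succ_fps_def by (simp add: field_simps)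
qed

lemma fps_nth_recip_succ_fps_0 [simp]: "fps_nth recip_succ_fps 0 = 0"
  by (simp add: recip_succ_fps_def)

lemma filterlim_recip_succ: "filterlim recip_succ (at_right 0) (at_right 0)"
proof -
  have "(recip_succ \<longlongrightarrow> 0) (at_right 0)" unfolding recip_succ_def by (auto intro!: tendsto_eq_intros)
  moreover have "eventually (\<lambda>t. recip_succ t \<in> {0<..}) (at_right (0::real))"
    using eventually_at_right_less[of 0] by eventually_elim (simp add: recip_succ_pos)
  ultimately show ?thesis by (auto simp: filterlim_at elim: eventually_mono)
qed

lemma has_asymp_expansion_compose_recip_succ:
  "has_asymp_expansion g G \<Longrightarrow> has_asymp_expansion (\<lambda>t. g (recip_succ t)) (G oo recip_succ_fps)"
  by (rule has_asymp_expansion_compose[OF _ has_asymp_expansion_recip_succ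
        fps_nth_recip_succ_fps_0 filterlim_recip_succ])

text \<open>Iterating \<open>recip_succ\<close> from \<open>t\<close> runs through the points \<open>1 / (1/t + k)\<close>, whose squares sum
  to at most \<open>2 t\<close>.\<close>

lemma abs_diff_le_along_recip_succ_orbit:
  fixes h :: "real \<Rightarrow> real"
  assumes "C \<ge> 0"
    and step: "\<And>s. 0 < s \<Longrightarrow> s \<le> t \<Longrightarrow> \<bar>h (recip_succ s) - h s\<bar> \<le> C * s ^ Suc (Suc K)"
    and t: "0 < t" "t \<le> 1/2"
  shows "\<bar>h (1 / (1/t + real n)) - h t\<bar> \<le> 2 * C * t ^ Suc K"
proof -
  define a where "a = 1 / t"
  have a: "a \<ge> 2" using t by (simp add: a_def field_simps)
  define u where "u k = 1 / (a + real k)" for k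
  have u_pos: "0 < u k" for k using a by (simp add: u_def)
  have u_le: "u k \<le> t" for k
  proof -
    have "u k \<le> 1 / a" using a by (auto simp: u_def intro!: divide_left_mono)
    thus ?thesis using t by (simp add: a_def)
  qed
  have u_step: "recip_succ (u k) = u (Suc k)" for k
    using a by (simp add: u_def recip_succ_def field_simps)
  have partial: "\<bar>h (u n) - h t\<bar> \<le> C * t ^ K * (\<Sum>k<n. 1 / (a + real k)^2)" for n
  proof (induction n)
    case 0 show ?case by (simp add: u_def a_def)
  next
    case (Suc n)
    have "\<bar>h (u (Suc n)) - h (u n)\<bar> \<le> C * (u n ^ K * u n ^ 2)"
      using step[OF u_pos u_le, of n] by (simp add: u_step power_add[symmetric])
    also have "\<dots> \<le> C * (t ^ K * (1 / (a + real n)^2))"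
      using u_pos[of n] u_le[of n] \<open>C \<ge> 0\<close> t
      by (intro mult_left_mono mult_mono power_mono) (auto simp: u_def power_divide)
    finally show ?case using Suc by (simp add: algebra_simps)
  qed
  have "0 \<le> 1 / (a + real n - 1)" using a by simp
  hence "(\<Sum>k<n. 1 / (a + real k)^2) \<le> 1 / (a - 1)"
    using sum_inverse_square_le[of a n] a by linarith
  also have "\<dots> \<le> 2 * t" using t a by (simp add: a_def field_simps)
  finally have "\<bar>h (u n) - h t\<bar> \<le> C * t ^ K * (2 * t)"
    using partial[of n] mult_left_mono[of _ "2 * t" "C * t ^ K"] \<open>C \<ge> 0\<close> t by force
  thus ?thesis by (simp add: u_def a_def algebra_simps)
qed

lemma abs_le_if_recip_succ_increments_le:
  fixes h :: "real \<Rightarrow> real"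
  assumes lim: "(h \<longlongrightarrow> 0) (at_right 0)" and "C \<ge> 0"
    and step: "\<And>s. 0 < s \<Longrightarrow> s \<le> t \<Longrightarrow> \<bar>h (recip_succ s) - h s\<bar> \<le> C * s ^ Suc (Suc K)"
    and t: "0 < t" "t \<le> 1/2"
  shows "\<bar>h t\<bar> \<le> 2 * C * t ^ Suc K"
proof -
  define u where "u n = 1 / (1/t + real n)" for n
  have "filterlim (\<lambda>n. 1/t + real n) at_top sequentially"
    by (rule filterlim_tendsto_add_at_top[OF tendsto_const filterlim_real_sequentially])
  hence "(u \<longlongrightarrow> 0) sequentially"
    unfolding u_def using tendsto_inverse_0_at_top by (simp add: inverse_eq_divide)
  moreover have "0 < u n" for n using t by (simp add: u_def add_pos_nonneg)
  ultimately have "filterlim u (at_right 0) sequentially"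
    by (auto simp: filterlim_at intro!: always_eventually) (metis less_irrefl)
  hence "((\<lambda>n. 2 * C * t ^ Suc K + \<bar>h (u n)\<bar>) \<longlongrightarrow> 2 * C * t ^ Suc K + \<bar>0\<bar>) sequentially"
    by (intro tendsto_intros filterlim_compose[OF lim])
  moreover have "\<bar>h t\<bar> \<le> 2 * C * t ^ Suc K + \<bar>h (u n)\<bar>" for n
    using abs_diff_le_along_recip_succ_orbit[OF assms(2-), of n] unfolding u_def by linarith
  ultimately show ?thesis by (intro LIMSEQ_le_const) auto
qed

lemma bigo_power_if_recip_succ_increments_bigo:
  fixes h :: "real \<Rightarrow> real"
  assumes lim: "(h \<longlongrightarrow> 0) (at_right 0)"
    and d: "(\<lambda>t. h (recip_succ t) - h t) \<in> O[at_right 0](\<lambda>t. t ^ Suc (Suc K))"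
  shows "h \<in> O[at_right 0](\<lambda>t. t ^ Suc K)"
proof -
  obtain C where C: "C > 0"
    "eventually (\<lambda>t. norm (h (recip_succ t) - h t) \<le> C * norm (t ^ Suc (Suc K))) (at_right 0)"
    using landau_o.bigE[OF d] by blast
  then obtain \<delta> where \<delta>: "\<delta> > 0"
    "\<And>s. 0 < s \<Longrightarrow> s < \<delta> \<Longrightarrow> \<bar>h (recip_succ s) - h s\<bar> \<le> C * s ^ Suc (Suc K)"
    by (auto simp: eventually_at_right_field abs_mult)
  have "eventually (\<lambda>t::real. 0 < t \<and> t < \<delta> \<and> t \<le> 1/2) (at_right 0)"
    using \<delta>(1) by (auto simp: eventually_at_right_field intro!: exI[of _ "min \<delta> (1/2)"])
  hence "eventually (\<lambda>t. norm (h t) \<le> (2 * C) * norm (t ^ Suc K)) (at_right 0)"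
  proof eventually_elim
    case (elim t)
    hence "\<bar>h t\<bar> \<le> 2 * C * t ^ Suc K"
      using C(1) \<delta>(2) by (intro abs_le_if_recip_succ_increments_le[OF lim]) auto
    thus ?case using elim by simp
  qed
  thus ?thesis by (rule bigoI)
qed

section \<open>The formal Laplace transform and the Bernoulli series\<close>

text \<open>The formal Laplace transform \<open>\<integral>\<^sub>0\<^sup>\<infinity> g(u) exp(-u/t) du = \<Sum>\<^sub>n n! g\<^sub>n t\<^sup>n\<^sup>+\<^sup>1\<close>.\<close>

definition fps_laplace :: "real fps \<Rightarrow> real fps" where
  "fps_laplace g = Abs_fps (\<lambda>n. if n = 0 then 0 else fact (n - 1) * fps_nth g (n - 1))"

lemma fps_nth_fps_laplace_0 [simp]: "fps_nth (fps_laplace g) 0 = 0"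
  by (simp add: fps_laplace_def)

lemma fps_nth_fps_laplace_Suc [simp]: "fps_nth (fps_laplace g) (Suc n) = fact n * fps_nth g n"
  by (simp add: fps_laplace_def)

lemma fps_laplace_add: "fps_laplace (f + g) = fps_laplace f + fps_laplace g"
  by (rule fps_ext) (simp add: fps_laplace_def algebra_simps)

lemma fps_laplace_const_mult: "fps_laplace (fps_const c * f) = fps_const c * fps_laplace f"
  by (rule fps_ext) (simp add: fps_laplace_def)

lemma fps_shift_fps_laplace:
  "fps_shift 1 (fps_laplace g) = fps_laplace (fps_deriv g) + fps_const (fps_nth g 0)"
proof (rule fps_ext)
  fix n
  show "fps_nth (fps_shift 1 (fps_laplace g)) n = fps_nth (fps_laplace (fps_deriv g) + fps_const (fps_nth g 0)) n"
    by (cases n) (simp_all add: fps_laplace_def algebra_simps)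
qed

lemma fps_nth_neg_X_power: "fps_nth ((- fps_X :: real fps) ^ k) m = (if m = k then (-1) ^ k else 0)"
proof (induction k arbitrary: m)
  case (Suc k)
  have "fps_nth ((- fps_X :: real fps) ^ Suc k) m = - fps_nth (fps_X * (- fps_X) ^ k) m" by simp
  also have "\<dots> = (if m = Suc k then (-1) ^ Suc k else 0)"
    by (cases m) (simp_all only: fps_X_mult_nth Suc.IH, auto)
  finally show ?case .
qed simp

lemma fps_laplace_neg_X_power:
  "fps_laplace ((- fps_X) ^ k) = fps_const ((-1) ^ k * fact k) * fps_X ^ Suc k"
proof (rule fps_ext)
  fix n
  show "fps_nth (fps_laplace ((- fps_X) ^ k)) n = fps_nth (fps_const ((-1) ^ k * fact k) * fps_X ^ Suc k) n"
    by (cases n) (simp_all add: fps_nth_neg_X_power)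
qed

lemma fps_nth_recip_succ_fps_power:
  "fps_nth (recip_succ_fps ^ Suc j) (Suc m) = (if j \<le> m then (-1) ^ (m - j) * real (m choose j) else 0)"
proof -
  have "recip_succ_fps ^ Suc j = fps_X ^ Suc j * inverse (1 + fps_X) ^ Suc j"
    by (simp only: recip_succ_fps_def power_mult_distrib)
  also have "inverse (1 + fps_X) ^ Suc j = fps_binomial (- of_nat (Suc j))"
    by (simp only: fps_inverse_power[symmetric] fps_binomial_minus_of_nat)
  finally have "fps_nth (recip_succ_fps ^ Suc j) (Suc m) =
      fps_nth (fps_X ^ Suc j * fps_binomial (- of_nat (Suc j))) (Suc m)"
    by (simp only:)
  also have "\<dots> = (if m < j then 0 else (- real (Suc j)) gchoose (m - j))"
    by (simp only: fps_X_power_mult_nth fps_binomial_nth) simp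
  also have "\<dots> = (if j \<le> m then (-1) ^ (m - j) * real (m choose j) else 0)"
  proof (cases "j \<le> m")
    case True
    have "(- real (Suc j)) gchoose (m - j) = (-1) ^ (m - j) * ((real (m - j) + real (Suc j) - 1) gchoose (m - j))"
      by (subst gbinomial_negated_upper) simp
    also have "real (m - j) + real (Suc j) - 1 = real m" using True by simp
    also have "real m gchoose (m - j) = real (m choose j)"
      using True by (simp add: binomial_gbinomial[symmetric] binomial_symmetric[symmetric])
    finally show ?thesis using True by simp
  qed simp
  finally show ?thesis .
qed

lemma fps_laplace_oo_recip_succ_fps: "fps_laplace g oo recip_succ_fps = fps_laplace (g * fps_exp (-1))"
proof (rule fps_ext)
  fix n
  show "fps_nth (fps_laplace g oo recip_succ_fps) n = fps_nth (fps_laplace (g * fps_exp (-1))) n"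
  proof (cases n)
    case (Suc m)
    have "fps_nth (fps_laplace g oo recip_succ_fps) n =
          (\<Sum>i=0..Suc m. fps_nth (fps_laplace g) i * fps_nth (recip_succ_fps ^ i) (Suc m))"
      by (simp add: fps_compose_nth Suc)
    also have "\<dots> = (\<Sum>j=0..m. fps_nth (fps_laplace g) (Suc j) * fps_nth (recip_succ_fps ^ Suc j) (Suc m))"
      by (subst sum.atLeast0_atMost_Suc_shift) simp
    also have "\<dots> = (\<Sum>j=0..m. fps_nth g j * (fact m * (-1) ^ (m - j) / fact (m - j)))"
    proof (rule sum.cong[OF refl])
      fix j assume j: "j \<in> {0..m}"
      hence "fact j * real (m choose j) = fact m / fact (m - j)"
        by (simp add: binomial_fact field_simps)
      thus "fps_nth (fps_laplace g) (Suc j) * fps_nth (recip_succ_fps ^ Suc j) (Suc m) =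
            fps_nth g j * (fact m * (-1) ^ (m - j) / fact (m - j))"
        using j by (simp only: fps_nth_fps_laplace_Suc fps_nth_recip_succ_fps_power) (simp add: field_simps)
    qed
    also have "\<dots> = fact m * fps_nth (g * fps_exp (-1)) m"
      by (simp add: fps_mult_nth sum_distrib_left field_simps)
    finally show ?thesis by (simp add: Suc)
  qed (simp add: fps_compose_nth)
qed

definition bernoulli_fps :: "real fps" where
  "bernoulli_fps = inverse (fps_shift 1 (fps_exp 1 - 1))"

lemma fps_nth_bernoulli_fps_0 [simp]: "fps_nth bernoulli_fps 0 = 1"
  by (simp add: bernoulli_fps_def)

lemma norlund_eq_bernoulli_fps_power: "norlund l r = fact r * fps_nth (bernoulli_fps ^ l) r"
  by (simp add: norlund_def bernoulli_fps_def)

lemma X_mult_fps_shift_exp_minus_1: "fps_X * fps_shift 1 (fps_exp 1 - 1) = (fps_exp 1 - 1 :: real fps)"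
  by (rule fps_ext) (simp add: fps_X_mult_nth)

lemma bernoulli_fps_mult_fps_shift_exp_minus_1: "bernoulli_fps * fps_shift 1 (fps_exp 1 - 1) = 1"
  unfolding bernoulli_fps_def by (rule inverse_mult_eq_1) simp

lemma bernoulli_fps_mult_exp_minus_1: "bernoulli_fps * (fps_exp 1 - 1) = fps_X"
proof -
  have "bernoulli_fps * (fps_exp 1 - 1) = fps_X * (bernoulli_fps * fps_shift 1 (fps_exp 1 - 1))"
    by (subst X_mult_fps_shift_exp_minus_1[symmetric]) (simp only: mult_ac)
  thus ?thesis by (simp only: bernoulli_fps_mult_fps_shift_exp_minus_1 mult_1_right)
qed

lemma bernoulli_fps_minus_X_deriv:
  "bernoulli_fps - fps_X * fps_deriv bernoulli_fps = bernoulli_fps^2 * fps_exp 1"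
proof -
  define D :: "real fps" where "D = fps_shift 1 (fps_exp 1 - 1)"
  have dD: "D + fps_X * fps_deriv D = fps_exp 1"
    using arg_cong[OF X_mult_fps_shift_exp_minus_1, of fps_deriv] by (simp add: D_def algebra_simps)
  have db: "fps_deriv bernoulli_fps = - fps_deriv D * bernoulli_fps^2"
    unfolding bernoulli_fps_def D_def by (rule fps_inverse_deriv) simp
  have "bernoulli_fps = bernoulli_fps^2 * D"
    unfolding D_def power2_eq_square mult.assoc bernoulli_fps_mult_fps_shift_exp_minus_1 by simp
  hence "bernoulli_fps - fps_X * fps_deriv bernoulli_fps = bernoulli_fps^2 * D + bernoulli_fps^2 * (fps_X * fps_deriv D)"
    by (simp add: db algebra_simps)
  also have "\<dots> = bernoulli_fps^2 * fps_exp 1" by (simp flip: dD add: algebra_simps)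
  finally show ?thesis .
qed

lemma fps_exp_neg_mult_fps_exp: "fps_exp (-1) * fps_exp 1 = (1 :: real fps)"
  by (simp flip: fps_exp_add_mult)

lemma exp_neg_mult_bernoulli_fps_power_deriv:
  "fps_exp (-1) * (fps_const (real (Suc k)) * bernoulli_fps ^ Suc k - fps_X * fps_deriv (bernoulli_fps ^ Suc k))
     = fps_const (real (Suc k)) * bernoulli_fps ^ Suc (Suc k)"
proof -
  have "fps_const (real (Suc k)) * bernoulli_fps ^ Suc k - fps_X * fps_deriv (bernoulli_fps ^ Suc k)
      = fps_const (real (Suc k)) * bernoulli_fps ^ k * (bernoulli_fps - fps_X * fps_deriv bernoulli_fps)"
    by (simp only: fps_deriv_power diff_Suc_1) (simp add: algebra_simps)
  also have "\<dots> = fps_const (real (Suc k)) * bernoulli_fps ^ Suc (Suc k) * fps_exp 1"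
    by (simp add: bernoulli_fps_minus_X_deriv power2_eq_square algebra_simps)
  finally show ?thesis
    by (simp add: mult.left_commute[of "fps_exp (-1)"] fps_exp_neg_mult_fps_exp)
qed

lemma fps_deriv_neg_X_power_Suc_mult:
  "fps_deriv ((- fps_X) ^ Suc i * B) + fps_const (real (Suc i + m)) * ((- fps_X) ^ i * B)
     = (- fps_X) ^ i * (fps_const (real m) * B - fps_X * fps_deriv (B :: real fps))"
proof -
  have d: "fps_deriv ((- fps_X :: real fps) ^ Suc i) = - fps_const (real (Suc i)) * (- fps_X) ^ i"
    by (simp only: fps_deriv_power diff_Suc_1) simp
  have c: "fps_const (real (Suc i + m)) = fps_const (real (Suc i)) + fps_const (real m :: real)"
    by simp
  have ring_identity: "\<And>Y c1 c2 (X :: real fps) B dB.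
      ((- X) * Y) * dB + (- c1 * Y) * B + (c1 + c2) * (Y * B) = Y * (c2 * B - X * dB)"
    by (simp add: algebra_simps)
  show ?thesis
    unfolding fps_deriv_mult d c unfolding power_Suc by (rule ring_identity)
qed

lemma bernoulli_fps_mult_one_minus_exp_neg: "bernoulli_fps * (1 - fps_exp (-1)) = fps_X * fps_exp (-1)"
proof -
  have "1 - fps_exp (-1) = fps_exp (-1) * (fps_exp 1 - 1 :: real fps)"
    using fps_exp_neg_mult_fps_exp by (simp add: algebra_simps)
  thus ?thesis by (simp add: bernoulli_fps_mult_exp_minus_1 mult.left_commute[of bernoulli_fps])
qed

section \<open>The polygamma functions near infinity\<close>

lemma abs_Polygamma_le:
  fixes w :: real assumes w: "w > 1" and j: "j \<ge> 1"
  shows "\<bar>Polygamma j w\<bar> \<le> fact j / (w - 1)"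
proof -
  have summ: "summable (\<lambda>k. inverse ((w + real k) ^ Suc j))"
    using Polygamma_converges'[of w "Suc j"] w j by simp
  have "(\<Sum>k. inverse ((w + real k) ^ Suc j)) \<le> 1 / (w - 1)"
  proof (rule suminf_le_const[OF summ])
    fix n
    have "(\<Sum>k<n. inverse ((w + real k) ^ Suc j)) \<le> (\<Sum>k<n. 1 / (w + real k)^2)"
    proof (rule sum_mono)
      fix k
      have "(w + real k)^2 \<le> (w + real k) ^ Suc j" using w j by (intro power_increasing) auto
      thus "inverse ((w + real k) ^ Suc j) \<le> 1 / (w + real k)^2"
        using w by (simp add: inverse_eq_divide divide_left_mono)
    qed
    also have "\<dots> \<le> 1 / (w - 1) - 1 / (w + real n - 1)" using w by (rule sum_inverse_square_le)
    also have "\<dots> \<le> 1 / (w - 1)" using w by simp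
    finally show "(\<Sum>k<n. inverse ((w + real k) ^ Suc j)) \<le> 1 / (w - 1)" .
  qed
  moreover have "(\<Sum>k. inverse ((w + real k) ^ Suc j)) \<ge> 0"
    using w by (intro suminf_nonneg summ) auto
  ultimately have "fact j * \<bar>\<Sum>k. inverse ((w + real k) ^ Suc j)\<bar> \<le> fact j * (1 / (w - 1))"
    by (intro mult_left_mono) auto
  moreover have "Polygamma j w = (-1) ^ Suc j * fact j * (\<Sum>k. inverse ((w + real k) ^ Suc j))"
    using j by (simp add: Polygamma_def)
  ultimately show ?thesis by (simp add: abs_mult)
qed

lemma Polygamma_inverse_plus_1_tendsto_0:
  assumes "j \<ge> 1"
  shows "((\<lambda>t. Polygamma j (1/t + 1 :: real)) \<longlongrightarrow> 0) (at_right 0)"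
proof (rule tendsto_sandwich[of "\<lambda>t. - (fact j * t)" _ _ "\<lambda>t. fact j * t"])
  have "eventually (\<lambda>t::real. \<bar>Polygamma j (1/t + 1)\<bar> \<le> fact j * t) (at_right 0)"
    using eventually_at_right_less[of 0]
    by eventually_elim (use abs_Polygamma_le[OF _ assms, of "1/t + 1" for t] in auto)
  thus "eventually (\<lambda>t::real. - (fact j * t) \<le> Polygamma j (1/t + 1)) (at_right 0)"
       "eventually (\<lambda>t::real. Polygamma j (1/t + 1) \<le> fact j * t) (at_right 0)"
    by (auto elim!: eventually_mono)
  show "((\<lambda>t::real. - (fact j * t)) \<longlongrightarrow> 0) (at_right 0)" "((\<lambda>t::real. fact j * t) \<longlongrightarrow> 0) (at_right 0)"
    by (auto intro!: tendsto_eq_intros)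
qed

lemma Digamma_plus_1_minus_ln_bounds:
  fixes x :: real
  assumes "x \<ge> 1"
  defines "n \<equiv> nat \<lfloor>x\<rfloor>"
  shows "(harm (Suc n) - ln (real (Suc n))) - euler_mascheroni - 1 / real (Suc n) \<le> Digamma (x + 1) - ln x"
    and "Digamma (x + 1) - ln x \<le> (harm n - ln (real n)) - euler_mascheroni + 1 / real (Suc n)"
proof -
  have n: "real n \<le> x" "x < real n + 1" "n \<ge> 1"
    using assms by (auto simp: n_def le_nat_floor of_nat_floor)
  have "harm n - euler_mascheroni = Digamma (real n + 1)"
    using Digamma_of_nat[of n, where 'a=real] by (simp add: add.commute)
  also have "\<dots> \<le> Digamma (x + 1)" using n by (intro Digamma_real_mono) auto
  finally have lower: "harm n - euler_mascheroni \<le> Digamma (x + 1)" .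
  have "Digamma (x + 1) \<le> Digamma (real (Suc n) + 1)" using n by (intro Digamma_real_mono) auto
  also have "\<dots> = harm n + 1 / real (Suc n) - euler_mascheroni"
    using Digamma_of_nat[of "Suc n", where 'a=real] by (simp add: add.commute harm_Suc inverse_eq_divide)
  finally have upper: "Digamma (x + 1) \<le> harm n + 1 / real (Suc n) - euler_mascheroni" .
  have "ln x \<le> ln (real (Suc n))" "ln (real n) \<le> ln x" using n by auto
  with lower upper show "(harm (Suc n) - ln (real (Suc n))) - euler_mascheroni - 1 / real (Suc n) \<le> Digamma (x + 1) - ln x"
    and "Digamma (x + 1) - ln x \<le> (harm n - ln (real n)) - euler_mascheroni + 1 / real (Suc n)"
    by (simp_all add: harm_Suc inverse_eq_divide)
qed

lemma Digamma_plus_1_minus_ln_tendsto_0: "((\<lambda>x::real. Digamma (x + 1) - ln x) \<longlongrightarrow> 0) at_top"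
proof -
  define lower where "lower n = (harm (Suc n) - ln (real (Suc n))) - euler_mascheroni - 1 / real (Suc n)" for n
  define upper where "upper n = (harm n - ln (real n)) - euler_mascheroni + 1 / real (Suc n)" for n
  define N where "N x = nat \<lfloor>x\<rfloor>" for x :: real
  have N: "filterlim N sequentially at_top"
    unfolding N_def by (rule filterlim_compose[OF filterlim_nat_sequentially filterlim_floor_sequentially])
  have inv: "(\<lambda>n. 1 / real (Suc n)) \<longlonglongrightarrow> 0"
    using LIMSEQ_inverse_real_of_nat by (simp add: inverse_eq_divide)
  have "lower \<longlonglongrightarrow> euler_mascheroni - euler_mascheroni - 0"
    unfolding lower_def by (intro tendsto_intros inv LIMSEQ_Suc[OF euler_mascheroni_LIMSEQ])
  from filterlim_compose[OF this N] have lower_lim: "((\<lambda>x. lower (N x)) \<longlongrightarrow> 0) at_top" by simp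
  have "upper \<longlonglongrightarrow> euler_mascheroni - euler_mascheroni + 0"
    unfolding upper_def by (intro tendsto_intros inv euler_mascheroni_LIMSEQ)
  from filterlim_compose[OF this N] have upper_lim: "((\<lambda>x. upper (N x)) \<longlongrightarrow> 0) at_top" by simp
  have "eventually (\<lambda>x. lower (N x) \<le> Digamma (x + 1) - ln x) at_top"
    using eventually_ge_at_top[of "1::real"]
    by (rule eventually_mono) (use Digamma_plus_1_minus_ln_bounds(1) in \<open>simp only: lower_def N_def\<close>)
  moreover have "eventually (\<lambda>x. Digamma (x + 1) - ln x \<le> upper (N x)) at_top"
    using eventually_ge_at_top[of "1::real"]
    by (rule eventually_mono) (use Digamma_plus_1_minus_ln_bounds(2) in \<open>simp only: upper_def N_def\<close>)
  ultimately show ?thesis using lower_lim upper_lim by (rule tendsto_sandwich)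
qed

lemma Digamma_inverse_plus_1_plus_ln_tendsto_0:
  "((\<lambda>t. Digamma (1/t + 1 :: real) + ln t) \<longlongrightarrow> 0) (at_right 0)"
proof -
  have "((\<lambda>t. Digamma (inverse t + 1) - ln (inverse t)) \<longlongrightarrow> 0) (at_right (0::real))"
    by (rule filterlim_compose[OF Digamma_plus_1_minus_ln_tendsto_0 filterlim_inverse_at_top_right])
  moreover have "eventually (\<lambda>t. Digamma (inverse t + 1) - ln (inverse t) = Digamma (1/t + 1) + ln t)
                   (at_right (0::real))"
    using eventually_at_right_less[of 0] by eventually_elim (simp add: ln_inverse divide_inverse)
  ultimately show ?thesis by (simp add: tendsto_cong)
qed

lemma Polygamma_inverse_recip_succ_plus_1:
  assumes "t > 0"
  shows "Polygamma j (1 / recip_succ t + 1) = Polygamma j (1/t + 1) + (-1) ^ j * fact j * recip_succ t ^ Suc j"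
proof -
  have "1/t + 1 \<noteq> (0::real)" using assms by (metis add_pos_pos less_numeral_extra(1,3) zero_less_divide_1_iff)
  moreover have "1 / recip_succ t + 1 = (1/t + 1) + 1" using assms by (simp add: inverse_recip_succ)
  moreover have "recip_succ t = inverse (1/t + 1)" using assms by (simp add: recip_succ_def field_simps)
  ultimately show ?thesis
    by (metis Polygamma_plus1 power_inverse divide_inverse mult_1 power_Suc2)
qed

text \<open>Formal counterpart of the difference equation \<open>Polygamma (i+1) (x + 1) = Polygamma (i+1) x + (-1)\<^sup>i\<^sup>+\<^sup>1 (i+1)! / x\<^sup>i\<^sup>+\<^sup>2\<close>.\<close>

lemma fps_laplace_neg_X_power_bernoulli_fps_oo_recip_succ_fps:
  "fps_laplace ((- fps_X) ^ i * bernoulli_fps) oo recip_succ_fps =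
     fps_laplace ((- fps_X) ^ i * bernoulli_fps) + fps_const ((-1) ^ Suc i * fact (Suc i)) * recip_succ_fps ^ Suc (Suc i)"
proof -
  have "fps_const ((-1) ^ Suc i * fact (Suc i)) * recip_succ_fps ^ Suc (Suc i) =
        fps_laplace ((- fps_X) ^ Suc i) oo recip_succ_fps"
  proof -
    have "recip_succ_fps ^ n = fps_X ^ n oo recip_succ_fps" for n
      using fps_compose_power[of recip_succ_fps fps_X n] by simp
    thus ?thesis by (simp only: fps_laplace_neg_X_power fps_const_mult_apply_left)
  qed
  also have "\<dots> = fps_laplace ((- fps_X) ^ Suc i * fps_exp (-1))"
    by (rule fps_laplace_oo_recip_succ_fps)
  finally have "fps_const ((-1) ^ Suc i * fact (Suc i)) * recip_succ_fps ^ Suc (Suc i) =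
      fps_laplace ((- fps_X) ^ Suc i * fps_exp (-1))" .
  moreover have "(- fps_X) ^ i * bernoulli_fps * fps_exp (-1) =
      (- fps_X) ^ i * bernoulli_fps + (- fps_X) ^ Suc i * fps_exp (-1)"
  proof -
    have "(- fps_X) ^ i * bernoulli_fps + (- fps_X) ^ Suc i * fps_exp (-1) - (- fps_X) ^ i * bernoulli_fps * fps_exp (-1)
        = (- fps_X) ^ i * (bernoulli_fps * (1 - fps_exp (-1)) - fps_X * fps_exp (-1))"
      by (simp add: algebra_simps)
    thus ?thesis by (simp add: bernoulli_fps_mult_one_minus_exp_neg)
  qed
  ultimately show ?thesis
    by (simp only: fps_laplace_oo_recip_succ_fps fps_laplace_add)
qed

lemma has_asymp_expansion_Polygamma_inverse_plus_1:
  "has_asymp_expansion (\<lambda>t. Polygamma (Suc i) (1/t + 1)) (fps_laplace ((- fps_X) ^ i * bernoulli_fps))"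
proof (rule has_asymp_expansionI)
  fix K
  define \<Phi> where "\<Phi> = fps_laplace ((- fps_X) ^ i * bernoulli_fps)"
  define c :: real where "c = (-1) ^ Suc i * fact (Suc i)"
  define p where "p = truncate_fps (Suc (Suc K)) \<Phi>"
  define h where "h t = Polygamma (Suc i) (1/t + 1) - poly p t" for t :: real
  have "(h \<longlongrightarrow> 0 - poly p 0) (at_right 0)"
    unfolding h_def by (intro tendsto_intros Polygamma_inverse_plus_1_tendsto_0) simp
  moreover have "poly p 0 = 0" by (simp add: p_def poly_0_coeff_0 \<Phi>_def)
  ultimately have lim: "(h \<longlongrightarrow> 0) (at_right 0)" by simp
  define R where "R = fps_const c * recip_succ_fps ^ Suc (Suc i) - (fps_of_poly p oo recip_succ_fps) + fps_of_poly p"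
  have "has_asymp_expansion (\<lambda>t. c * recip_succ t ^ Suc (Suc i) - poly p (recip_succ t) + poly p t) R"
    unfolding R_def
    by (intro has_asymp_expansion_add has_asymp_expansion_diff has_asymp_expansion_cmult
        has_asymp_expansion_power has_asymp_expansion_recip_succ has_asymp_expansion_compose_recip_succ
        has_asymp_expansion_poly)
  moreover have "\<forall>n\<le>Suc K. coeff 0 n = fps_nth R n"
  proof (intro allI impI)
    fix n assume n: "n \<le> Suc K"
    hence "fps_nth (fps_of_poly p oo recip_succ_fps) n = fps_nth (\<Phi> oo recip_succ_fps) n"
      by (simp add: fps_compose_nth p_def)
    with n have "fps_nth R n = fps_nth (fps_const c * recip_succ_fps ^ Suc (Suc i) - (\<Phi> oo recip_succ_fps) + \<Phi>) n"
      by (simp add: R_def p_def)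
    thus "coeff 0 n = fps_nth R n"
      unfolding c_def \<Phi>_def fps_laplace_neg_X_power_bernoulli_fps_oo_recip_succ_fps by simp
  qed
  ultimately have "(\<lambda>t. c * recip_succ t ^ Suc (Suc i) - poly p (recip_succ t) + poly p t - poly 0 t)
                    \<in> O[at_right 0](\<lambda>t. t ^ Suc (Suc K))"
    by (rule has_asymp_expansionD)
  moreover have "eventually (\<lambda>t. c * recip_succ t ^ Suc (Suc i) - poly p (recip_succ t) + poly p t - poly 0 t
                    = h (recip_succ t) - h t) (at_right 0)"
    using eventually_at_right_less[of 0]
    by eventually_elim (simp add: h_def Polygamma_inverse_recip_succ_plus_1 c_def)
  ultimately have "(\<lambda>t. h (recip_succ t) - h t) \<in> O[at_right 0](\<lambda>t. t ^ Suc (Suc K))"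
    by (subst (asm) landau_o.big.in_cong)
  from bigo_power_if_recip_succ_increments_bigo[OF lim this]
  show "\<exists>p. (\<forall>n\<le>K. coeff p n = fps_nth (fps_laplace ((- fps_X) ^ i * bernoulli_fps)) n) \<and>
        (\<lambda>t. Polygamma (Suc i) (1/t + 1) - poly p t) \<in> O[at_right 0](\<lambda>t. t ^ Suc K)"
    by (intro exI[of _ p]) (auto simp: p_def \<Phi>_def h_def[abs_def])
qed

section \<open>Derivatives of \<open>binom(x-1, l-1) \<psi>(x)\<close>\<close>

definition smooth_pos :: "(real \<Rightarrow> real) \<Rightarrow> bool" where
  "smooth_pos f \<longleftrightarrow> (\<forall>n x. x > 0 \<longrightarrow> ((deriv ^^ n) f has_real_derivative (deriv ^^ Suc n) f x) (at x))"

lemma eventually_pos_nhds: "(x::real) > 0 \<Longrightarrow> eventually (\<lambda>y. y > 0) (nhds x)"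
  by (rule eventually_nhds_in_open[of "{0<..}", simplified]) auto

lemma higher_deriv_Digamma:
  assumes "(x::real) > 0" shows "(deriv ^^ n) Digamma x = Polygamma n x"
proof -
  have "x \<notin> \<int>\<^sub>\<le>\<^sub>0" using assms by (auto elim!: nonpos_Ints_cases)
  thus ?thesis using higher_deriv_Polygamma[of x n 0] by simp
qed

lemma smooth_pos_Digamma: "smooth_pos Digamma"
  unfolding smooth_pos_def
proof (intro allI impI)
  fix n and x :: real assume x: "x > 0"
  have "eventually (\<lambda>y. (deriv ^^ n) Digamma y = Polygamma n y) (nhds x)"
    using eventually_pos_nhds[OF x] by eventually_elim (rule higher_deriv_Digamma)
  moreover have "(Polygamma n has_real_derivative Polygamma (Suc n) x) (at x)"
    using x by (intro has_field_derivative_Polygamma) (auto elim!: nonpos_Ints_cases)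
  ultimately show "((deriv ^^ n) Digamma has_real_derivative (deriv ^^ Suc n) Digamma x) (at x)"
    using x by (simp add: DERIV_cong_ev higher_deriv_Digamma del: funpow.simps)
qed

lemma has_real_derivative_higher_deriv_linear_mult:
  assumes "smooth_pos g" "x > 0"
  shows "((\<lambda>y. c * ((y - a) * (deriv ^^ n) g y + real n * (deriv ^^ (n - 1)) g y)) has_real_derivative
           c * ((x - a) * (deriv ^^ Suc n) g x + real (Suc n) * (deriv ^^ n) g x)) (at x)"
proof -
  have "((deriv ^^ n) g has_real_derivative (deriv ^^ Suc n) g x) (at x)"
    and "((deriv ^^ (n - 1)) g has_real_derivative (deriv ^^ Suc (n - 1)) g x) (at x)"
    using assms unfolding smooth_pos_def by blast+
  hence "((\<lambda>y. c * ((y - a) * (deriv ^^ n) g y + real n * (deriv ^^ (n - 1)) g y)) has_real_derivative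
      c * ((1 - 0) * (deriv ^^ n) g x + (deriv ^^ Suc n) g x * (x - a) + real n * (deriv ^^ Suc (n - 1)) g x)) (at x)"
    by (intro DERIV_cmult DERIV_add DERIV_mult DERIV_diff DERIV_ident DERIV_const)
  moreover have "real n * (deriv ^^ Suc (n - 1)) g x = real n * (deriv ^^ n) g x"
    by (cases n) auto
  moreover have "c * ((1 - 0) * u + v * (x - a) + real n * u) = c * ((x - a) * v + real (Suc n) * u)" for u v
    by (simp add: algebra_simps)
  ultimately show ?thesis by (simp only:)
qed

lemma higher_deriv_linear_mult:
  assumes "smooth_pos g" "x > 0"
  shows "(deriv ^^ n) (\<lambda>x. c * ((x - a) * g x)) x = c * ((x - a) * (deriv ^^ n) g x + real n * (deriv ^^ (n - 1)) g x)"
  using assms(2)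
proof (induction n arbitrary: x)
  case (Suc n)
  have "eventually (\<lambda>y. (deriv ^^ n) (\<lambda>x. c * ((x - a) * g x)) y =
           c * ((y - a) * (deriv ^^ n) g y + real n * (deriv ^^ (n - 1)) g y)) (nhds x)"
    using eventually_pos_nhds[OF Suc.prems] by eventually_elim (rule Suc.IH)
  hence "(deriv ^^ Suc n) (\<lambda>x. c * ((x - a) * g x)) x =
         deriv (\<lambda>y. c * ((y - a) * (deriv ^^ n) g y + real n * (deriv ^^ (n - 1)) g y)) x"
    by (simp only: funpow.simps o_apply) (rule deriv_cong_ev[OF _ refl])
  also have "\<dots> = c * ((x - a) * (deriv ^^ Suc n) g x + real (Suc n) * (deriv ^^ n) g x)"
    by (rule DERIV_imp_deriv[OF has_real_derivative_higher_deriv_linear_mult[OF assms(1) Suc.prems]])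
  finally show ?case by simp
qed simp

lemma smooth_pos_linear_mult:
  assumes "smooth_pos g"
  shows "smooth_pos (\<lambda>x. c * ((x - a) * g x))"
  unfolding smooth_pos_def
proof (intro allI impI)
  fix n and x :: real assume x: "x > 0"
  have "eventually (\<lambda>y. (deriv ^^ n) (\<lambda>x. c * ((x - a) * g x)) y =
           c * ((y - a) * (deriv ^^ n) g y + real n * (deriv ^^ (n - 1)) g y)) (nhds x)"
    using eventually_pos_nhds[OF x] by eventually_elim (rule higher_deriv_linear_mult[OF assms])
  hence "((deriv ^^ n) (\<lambda>x. c * ((x - a) * g x)) has_real_derivative
          c * ((x - a) * (deriv ^^ Suc n) g x + real (Suc n) * (deriv ^^ n) g x)) (at x)"
    using has_real_derivative_higher_deriv_linear_mult[OF assms x, of c a n] by (subst DERIV_cong_ev) auto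
  thus "((deriv ^^ n) (\<lambda>x. c * ((x - a) * g x)) has_real_derivative
          (deriv ^^ Suc n) (\<lambda>x. c * ((x - a) * g x)) x) (at x)"
    using higher_deriv_linear_mult[OF assms x, of "Suc n"] by simp
qed

lemma higher_deriv_minus_poly:
  assumes "smooth_pos g" "x > 0"
  shows "(deriv ^^ n) (\<lambda>y. g y - poly q y) x = (deriv ^^ n) g x - poly ((pderiv ^^ n) q) x"
  using assms(2)
proof (induction n arbitrary: x)
  case (Suc n)
  have "eventually (\<lambda>y. (deriv ^^ n) (\<lambda>y. g y - poly q y) y = (deriv ^^ n) g y - poly ((pderiv ^^ n) q) y) (nhds x)"
    using eventually_pos_nhds[OF Suc.prems] by eventually_elim (rule Suc.IH)
  hence "(deriv ^^ Suc n) (\<lambda>y. g y - poly q y) x = deriv (\<lambda>y. (deriv ^^ n) g y - poly ((pderiv ^^ n) q) y) x"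
    by (simp only: funpow.simps o_apply) (rule deriv_cong_ev[OF _ refl])
  also have "\<dots> = (deriv ^^ Suc n) g x - poly (pderiv ((pderiv ^^ n) q)) x"
    using assms(1) Suc.prems unfolding smooth_pos_def by (intro DERIV_imp_deriv DERIV_diff poly_DERIV) auto
  finally show ?case by simp
qed simp

definition gchoose_Digamma :: "nat \<Rightarrow> real \<Rightarrow> real" where
  "gchoose_Digamma l x = ((x - 1) gchoose (l - 1)) * Digamma x"

lemma gchoose_Digamma_1: "gchoose_Digamma (Suc 0) = Digamma"
  by (simp add: gchoose_Digamma_def fun_eq_iff)

lemma gchoose_Digamma_Suc_Suc:
  "gchoose_Digamma (Suc (Suc k)) = (\<lambda>x. (1 / real (Suc k)) * ((x - real (Suc k)) * gchoose_Digamma (Suc k) x))"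
proof
  fix x :: real
  have "(x - 1) gchoose Suc k = (1 / real (Suc k)) * ((x - real (Suc k)) * ((x - 1) gchoose k))"
    using gbinomial_mult_1[of "x - 1" k] by (simp add: field_simps)
  thus "gchoose_Digamma (Suc (Suc k)) x = (1 / real (Suc k)) * ((x - real (Suc k)) * gchoose_Digamma (Suc k) x)"
    by (simp add: gchoose_Digamma_def)
qed

lemma smooth_pos_gchoose_Digamma: "smooth_pos (gchoose_Digamma (Suc k))"
proof (induction k)
  case (Suc k) thus ?case by (simp only: gchoose_Digamma_Suc_Suc) (rule smooth_pos_linear_mult)
qed (simp add: gchoose_Digamma_1 smooth_pos_Digamma)

lemma higher_deriv_gchoose_Digamma_1: "x > 0 \<Longrightarrow> (deriv ^^ n) (gchoose_Digamma (Suc 0)) x = Polygamma n x"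
  by (simp add: gchoose_Digamma_1 higher_deriv_Digamma)

lemma has_real_derivative_higher_deriv_gchoose_Digamma:
  "x > 0 \<Longrightarrow> ((deriv ^^ n) (gchoose_Digamma (Suc k)) has_real_derivative
     (deriv ^^ Suc n) (gchoose_Digamma (Suc k)) x) (at x)"
  using smooth_pos_gchoose_Digamma[of k] unfolding smooth_pos_def by blast

lemma higher_deriv_gchoose_Digamma_Suc_Suc:
  "x > 0 \<Longrightarrow> (deriv ^^ n) (gchoose_Digamma (Suc (Suc k))) x =
     (1 / real (Suc k)) * ((x - real (Suc k)) * (deriv ^^ n) (gchoose_Digamma (Suc k)) x
       + real n * (deriv ^^ (n - 1)) (gchoose_Digamma (Suc k)) x)"
  unfolding gchoose_Digamma_Suc_Suc by (rule higher_deriv_linear_mult[OF smooth_pos_gchoose_Digamma])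

lemma fps_laplace_bernoulli_fps_power_Suc:
  "(fps_const (1 / real (Suc k)) *
      (fps_shift 1 (fps_laplace ((- fps_X) ^ Suc i * bernoulli_fps ^ Suc k))
       + fps_const (real (Suc i + Suc k)) * fps_laplace ((- fps_X) ^ i * bernoulli_fps ^ Suc k)))
     oo recip_succ_fps
   = fps_laplace ((- fps_X) ^ i * bernoulli_fps ^ Suc (Suc k))"
proof -
  define B where "B = bernoulli_fps ^ Suc k"
  define W where "W = fps_deriv ((- fps_X) ^ Suc i * B) + fps_const (real (Suc i + Suc k)) * ((- fps_X) ^ i * B)"
  have "fps_exp (-1) * W = (- fps_X) ^ i * (fps_exp (-1) * (fps_const (real (Suc k)) * B - fps_X * fps_deriv B))"
    unfolding W_def by (subst fps_deriv_neg_X_power_Suc_mult) (rule mult.left_commute)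
  also have "\<dots> = fps_const (real (Suc k)) * ((- fps_X) ^ i * bernoulli_fps ^ Suc (Suc k))"
    unfolding B_def by (simp only: exp_neg_mult_bernoulli_fps_power_deriv mult.left_commute)
  finally have eW: "fps_exp (-1) * W = fps_const (real (Suc k)) * ((- fps_X) ^ i * bernoulli_fps ^ Suc (Suc k))" .
  have "fps_const (1 / real (Suc k)) * W * fps_exp (-1) = fps_const (1 / real (Suc k)) * (fps_exp (-1) * W)"
    by (simp only: mult_ac)
  also have "\<dots> = (fps_const (1 / real (Suc k)) * fps_const (real (Suc k))) * ((- fps_X) ^ i * bernoulli_fps ^ Suc (Suc k))"
    by (simp only: eW mult.assoc)
  also have "fps_const (1 / real (Suc k)) * fps_const (real (Suc k)) = 1"
    by (simp flip: fps_const_mult del: of_nat_Suc)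
  finally have "fps_const (1 / real (Suc k)) * W * fps_exp (-1) = (- fps_X) ^ i * bernoulli_fps ^ Suc (Suc k)"
    by simp
  moreover have "fps_nth ((- fps_X) ^ Suc i * B) 0 = 0" by simp
  ultimately show ?thesis
    unfolding B_def[symmetric] W_def
    by (simp only: fps_shift_fps_laplace fps_laplace_oo_recip_succ_fps fps_laplace_const_mult[symmetric]
        fps_laplace_add[symmetric] fps_const_0_eq_0 add_0_right)
qed

lemma higher_deriv_gchoose_Digamma_Suc_Suc_recip_succ:
  assumes "t > 0"
  defines "s \<equiv> recip_succ t"
  shows "(deriv ^^ n) (gchoose_Digamma (Suc (Suc k))) (1/t + real (Suc (Suc k))) =
           ((deriv ^^ n) (gchoose_Digamma (Suc k)) (1/s + real (Suc k)) / s
            + real n * (deriv ^^ (n - 1)) (gchoose_Digamma (Suc k)) (1/s + real (Suc k))) / real (Suc k)"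
proof -
  have x: "1/t + real (Suc (Suc k)) > 0" using assms by (intro add_pos_nonneg) auto
  have shift: "1/t + real (Suc (Suc k)) - real (Suc k) = 1 / s" "1/t + real (Suc (Suc k)) = 1 / s + real (Suc k)"
    using assms by (simp_all add: inverse_recip_succ)
  show ?thesis
    unfolding higher_deriv_gchoose_Digamma_Suc_Suc[OF x] shift(1) unfolding shift(2)
    by (simp add: field_simps)
qed

lemma has_asymp_expansion_higher_deriv_gchoose_Digamma:
  "has_asymp_expansion (\<lambda>t. (deriv ^^ (k + Suc i)) (gchoose_Digamma (Suc k)) (1/t + real (Suc k)))
     (fps_laplace ((- fps_X) ^ i * bernoulli_fps ^ Suc k))"
proof (induction k arbitrary: i)
  case 0
  have "eventually (\<lambda>t. Polygamma (Suc i) (1/t + 1) =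
          (deriv ^^ (0 + Suc i)) (gchoose_Digamma (Suc 0)) (1/t + real (Suc 0))) (at_right 0)"
    using eventually_at_right_less[of 0]
    by eventually_elim (subst higher_deriv_gchoose_Digamma_1, auto intro: add_pos_pos)
  from has_asymp_expansion_cong[OF has_asymp_expansion_Polygamma_inverse_plus_1 this]
  show ?case by simp
next
  case (Suc k)
  define A where "A j s = (deriv ^^ (k + Suc j)) (gchoose_Digamma (Suc k)) (1/s + real (Suc k))" for j s
  define g where "g s = (A (Suc i) s / s + real (Suc i + Suc k) * A i s) / real (Suc k)" for s
  have "has_asymp_expansion g
          (fps_const (1 / real (Suc k)) *
            (fps_shift 1 (fps_laplace ((- fps_X) ^ Suc i * bernoulli_fps ^ Suc k))
             + fps_const (real (Suc i + Suc k)) * fps_laplace ((- fps_X) ^ i * bernoulli_fps ^ Suc k)))"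
    using has_asymp_expansion_cmult[OF has_asymp_expansion_add[OF
            has_asymp_expansion_divide_ident[OF Suc.IH[of "Suc i"]] has_asymp_expansion_cmult[OF Suc.IH[of i]]],
            of "1 / real (Suc k)" "real (Suc i + Suc k)"]
    unfolding g_def A_def by (simp add: divide_inverse mult.commute)
  from has_asymp_expansion_compose_recip_succ[OF this]
  have "has_asymp_expansion (\<lambda>t. g (recip_succ t)) (fps_laplace ((- fps_X) ^ i * bernoulli_fps ^ Suc (Suc k)))"
    by (simp only: fps_laplace_bernoulli_fps_power_Suc)
  moreover have "eventually (\<lambda>t. g (recip_succ t) =
      (deriv ^^ (Suc k + Suc i)) (gchoose_Digamma (Suc (Suc k))) (1/t + real (Suc (Suc k)))) (at_right 0)"
    using eventually_at_right_less[of 0]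
  proof eventually_elim
    case (elim t)
    show ?case
      by (simp only: higher_deriv_gchoose_Digamma_Suc_Suc_recip_succ[OF elim])
         (simp add: g_def A_def add_ac del: funpow.simps)
  qed
  ultimately show ?case by (rule has_asymp_expansion_cong)
qed

lemma tendsto_higher_deriv_gchoose_Digamma_plus_ln:
  "((\<lambda>t. (deriv ^^ k) (gchoose_Digamma (Suc k)) (1/t + real (Suc k)) + ln t) \<longlongrightarrow> harm k) (at_right 0)"
proof (induction k)
  case 0
  have "eventually (\<lambda>t. Digamma (1/t + 1) + ln t =
          (deriv ^^ 0) (gchoose_Digamma (Suc 0)) (1/t + real (Suc 0)) + ln t) (at_right 0)"
    by (simp add: gchoose_Digamma_1)
  with Digamma_inverse_plus_1_plus_ln_tendsto_0 show ?case
    by (simp add: tendsto_cong harm_def)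
next
  case (Suc k)
  define D where "D n s = (deriv ^^ n) (gchoose_Digamma (Suc k)) (1/s + real (Suc k))" for n s
  have "has_asymp_expansion (\<lambda>s. D (Suc k) s / s) (fps_shift 1 (fps_laplace (bernoulli_fps ^ Suc k)))"
    using has_asymp_expansion_higher_deriv_gchoose_Digamma[of k 0] unfolding D_def
    by (intro has_asymp_expansion_divide_ident) simp_all
  from has_asymp_expansion_tendsto[OF this]
  have "((\<lambda>s. D (Suc k) s / s) \<longlongrightarrow> 1) (at_right 0)" by (simp add: fps_nth_power_0)
  moreover have "((\<lambda>t::real. ln (1 + t)) \<longlongrightarrow> 0) (at_right 0)"
    by (rule tendsto_eq_intros | simp)+
  ultimately have "((\<lambda>t. (D k (recip_succ t) + ln (recip_succ t)) + ln (1 + t)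
       + D (Suc k) (recip_succ t) / recip_succ t / real (Suc k))
       \<longlongrightarrow> harm k + 0 + 1 / real (Suc k)) (at_right 0)"
    using Suc.IH unfolding D_def[symmetric]
    by (intro tendsto_intros filterlim_compose[OF _ filterlim_recip_succ]) simp_all
  moreover have "eventually (\<lambda>t. (D k (recip_succ t) + ln (recip_succ t)) + ln (1 + t)
       + D (Suc k) (recip_succ t) / recip_succ t / real (Suc k)
       = (deriv ^^ Suc k) (gchoose_Digamma (Suc (Suc k))) (1/t + real (Suc (Suc k))) + ln t) (at_right 0)"
    using eventually_at_right_less[of 0]
  proof eventually_elim
    case (elim t)
    hence "ln t = ln (recip_succ t) + ln (1 + t)" by (simp add: recip_succ_def ln_div)
    thus ?case
      by (simp only: higher_deriv_gchoose_Digamma_Suc_Suc_recip_succ[OF elim])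
         (simp add: D_def add_divide_distrib del: funpow.simps)
  qed
  ultimately show ?case by (simp add: tendsto_cong harm_Suc inverse_eq_divide add_ac)
qed

definition gchoose_Digamma_log_fps :: "nat \<Rightarrow> real fps" where
  "gchoose_Digamma_log_fps k =
     fps_integral (fps_shift 1 (1 - fps_shift 1 (fps_laplace (bernoulli_fps ^ Suc k)))) (harm k)"

lemma fps_nth_gchoose_Digamma_log_fps_0: "fps_nth (gchoose_Digamma_log_fps k) 0 = harm k"
  by (simp add: gchoose_Digamma_log_fps_def)

lemma fps_nth_gchoose_Digamma_log_fps:
  "n > 0 \<Longrightarrow> fps_nth (gchoose_Digamma_log_fps k) n = - norlund (Suc k) n / real n"
  by (cases n) (simp_all add: gchoose_Digamma_log_fps_def norlund_eq_bernoulli_fps_power field_simps)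

lemma has_asymp_expansion_higher_deriv_gchoose_Digamma_plus_ln:
  "has_asymp_expansion (\<lambda>t. (deriv ^^ k) (gchoose_Digamma (Suc k)) (1/t + real (Suc k)) + ln t)
     (gchoose_Digamma_log_fps k)"
  unfolding gchoose_Digamma_log_fps_def
proof (rule has_asymp_expansion_integral[where \<delta> = 1])
  define A where "A t = (deriv ^^ Suc k) (gchoose_Digamma (Suc k)) (1/t + real (Suc k))" for t
  have "has_asymp_expansion (\<lambda>t. A t / t) (fps_shift 1 (fps_laplace (bernoulli_fps ^ Suc k)))"
    using has_asymp_expansion_higher_deriv_gchoose_Digamma[of k 0] unfolding A_def
    by (intro has_asymp_expansion_divide_ident) simp_all
  hence "has_asymp_expansion (\<lambda>t. 1 - A t / t) (fps_const 1 - fps_shift 1 (fps_laplace (bernoulli_fps ^ Suc k)))"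
    by (rule has_asymp_expansion_diff[OF has_asymp_expansion_const])
  hence "has_asymp_expansion (\<lambda>t. (1 - A t / t) / t) (fps_shift 1 (fps_const 1 - fps_shift 1 (fps_laplace (bernoulli_fps ^ Suc k))))"
    by (rule has_asymp_expansion_divide_ident) (simp add: fps_nth_power_0)
  thus "has_asymp_expansion (\<lambda>t. (1 - A t / t) / t) (fps_shift 1 (1 - fps_shift 1 (fps_laplace (bernoulli_fps ^ Suc k))))"
    by simp
  fix t :: real assume t: "0 < t" "t < 1"
  have "((\<lambda>t. 1/t + real (Suc k)) has_real_derivative - (1 / t^2)) (at t)"
    using t by (auto intro!: derivative_eq_intros simp: power2_eq_square field_simps)
  with t have "((\<lambda>t. (deriv ^^ k) (gchoose_Digamma (Suc k)) (1/t + real (Suc k)) + ln t) has_real_derivative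
      A t * (- (1 / t^2)) + inverse t) (at t)"
    unfolding A_def
    by (intro DERIV_add DERIV_chain2[OF has_real_derivative_higher_deriv_gchoose_Digamma] DERIV_ln)
       (auto intro: add_pos_nonneg)
  thus "((\<lambda>t. (deriv ^^ k) (gchoose_Digamma (Suc k)) (1/t + real (Suc k)) + ln t) has_real_derivative
      (1 - A t / t) / t) (at t)"
    by (rule DERIV_cong) (use t in \<open>simp add: field_simps power2_eq_square\<close>)
qed (use tendsto_higher_deriv_gchoose_Digamma_plus_ln in simp_all)

lemma higher_pderiv_eq_0: "degree (p :: 'a::{comm_semiring_1,semiring_no_zero_divisors} poly) < n \<Longrightarrow> (pderiv ^^ n) p = 0"
  by (rule poly_eqI) (simp add: coeff_higher_pderiv coeff_eq_0)

lemma gchoose_divide_linear_is_poly: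
  assumes "1 \<le> j" "j \<le> k"
  obtains q :: "real poly"
    where "(pderiv ^^ k) q = 0" "\<And>x. poly q x * (x - real j) = (x - 1) gchoose k"
proof
  define q where "q = smult (1 / fact k) (\<Prod>i\<in>{0..<k} - {j - 1}. [:- (1 + real i), 1:])"
  have "degree q \<le> card ({0..<k} - {j - 1})"
    unfolding q_def using degree_prod_sum_le[of "{0..<k} - {j - 1}" "\<lambda>i. [:- (1 + real i), 1:]"]
    by (simp add: o_def)
  also have "\<dots> < k" using assms by (simp add: card_Diff_singleton)
  finally show "(pderiv ^^ k) q = 0" by (rule higher_pderiv_eq_0)
  fix x :: real
  have "fact k * ((x - 1) gchoose k) = (\<Prod>i=0..<k. x - 1 - real i)"
    by (simp add: gbinomial_mult_fact)
  also have "\<dots> = (x - 1 - real (j - 1)) * (\<Prod>i\<in>{0..<k} - {j - 1}. x - 1 - real i)"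
    using assms by (subst prod.remove[of _ "j - 1"]) auto
  also have "x - 1 - real (j - 1) = x - real j" using assms by (simp add: of_nat_diff)
  finally show "poly q x * (x - real j) = (x - 1) gchoose k"
    by (simp add: q_def poly_prod field_simps)
qed

lemma gchoose_mult_Digamma_diff_is_poly:
  assumes "m \<le> k"
  shows "\<exists>q :: real poly. (pderiv ^^ k) q = 0 \<and>
           (\<forall>x > real k. poly q x = ((x - 1) gchoose k) * (Digamma x - Digamma (x - real m)))"
  using assms
proof (induction m)
  case 0 show ?case by (intro exI[of _ 0]) simp
next
  case (Suc m)
  then obtain q where q: "(pderiv ^^ k) q = 0"
    "\<forall>x > real k. poly q x = ((x - 1) gchoose k) * (Digamma x - Digamma (x - real m))" by auto
  obtain r where r: "(pderiv ^^ k) r = 0" "\<And>x. poly r x * (x - real (Suc m)) = (x - 1) gchoose k"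
    using gchoose_divide_linear_is_poly[of "Suc m" k] Suc.prems by auto
  have "poly (q + r) x = ((x - 1) gchoose k) * (Digamma x - Digamma (x - real (Suc m)))" if x: "x > real k" for x
  proof -
    have "x - real (Suc m) > 0" using x Suc.prems by linarith
    hence "Digamma (x - real m) = Digamma (x - real (Suc m)) + 1 / (x - real (Suc m))"
      using Digamma_plus1[of "x - real (Suc m)"] by simp
    moreover have "poly r x = ((x - 1) gchoose k) / (x - real (Suc m))"
      using r(2)[of x] \<open>x - real (Suc m) > 0\<close> by (simp add: field_simps)
    ultimately show ?thesis using q(2)[rule_format, OF x] by (simp add: algebra_simps)
  qed
  moreover have "(pderiv ^^ k) (q + r) = 0"
    using q(1) r(1) by (simp add: higher_pderiv_add)
  ultimately show ?case by blast
qed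

lemma higher_deriv_gchoose_mult_Digamma_shift:
  assumes "m \<le> k" "x > real k"
  shows "(deriv ^^ k) (\<lambda>x. ((x - 1) gchoose k) * Digamma (x - real m)) x =
         (deriv ^^ k) (gchoose_Digamma (Suc k)) x"
proof -
  obtain q where q: "(pderiv ^^ k) q = 0"
    "\<forall>y > real k. poly q y = ((y - 1) gchoose k) * (Digamma y - Digamma (y - real m))"
    using gchoose_mult_Digamma_diff_is_poly[OF assms(1)] by blast
  have "eventually (\<lambda>y. y > real k) (nhds x)"
    using assms(2) by (rule eventually_nhds_in_open[of "{real k<..}", simplified])
  hence "eventually (\<lambda>y. ((y - 1) gchoose k) * Digamma (y - real m) = gchoose_Digamma (Suc k) y - poly q y) (nhds x)"
    by eventually_elim (simp add: q(2) gchoose_Digamma_def algebra_simps)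
  hence "(deriv ^^ k) (\<lambda>x. ((x - 1) gchoose k) * Digamma (x - real m)) x =
         (deriv ^^ k) (\<lambda>y. gchoose_Digamma (Suc k) y - poly q y) x"
    by (rule higher_deriv_cong_ev) simp
  also have "\<dots> = (deriv ^^ k) (gchoose_Digamma (Suc k)) x"
    using assms(2) by (simp add: higher_deriv_minus_poly[OF smooth_pos_gchoose_Digamma] q(1)
        of_nat_less_0_iff order.strict_trans1)
  finally show ?thesis .
qed

section \<open>Generating function of the modified Noerlund polynomials\<close>

lemma inverse_one_minus_fps_X: "inverse (1 - fps_X) = Abs_fps (\<lambda>_. 1 :: real)"
proof -
  have "inverse (Abs_fps (\<lambda>_. 1 :: real)) = 1 - fps_X" by (rule fps_inverse_gp')
  thus ?thesis by (metis fps_inverse_idempotent fps_nth_Abs_fps zero_neq_one)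
qed

lemma fps_nth_inverse_one_minus_fps_X_power:
  "fps_nth (inverse (1 - fps_X) ^ Suc j) n = real ((n + j) choose j)"
proof (induction j arbitrary: n)
  case (Suc j)
  have "fps_nth (inverse (1 - fps_X) ^ Suc (Suc j)) n = (\<Sum>i\<le>n. real ((i + j) choose j))"
    by (simp only: power_Suc2[of _ "Suc j"] fps_mult_nth Suc.IH)
       (simp add: inverse_one_minus_fps_X atLeast0AtMost)
  also have "\<dots> = real (\<Sum>i\<le>n. (j + i) choose i)"
    by (simp add: binomial_symmetric[of j, simplified] add.commute)
  also have "(\<Sum>i\<le>n. (j + i) choose i) = Suc (j + n) choose n"
    by (rule sum_choose_lower)
  also have "\<dots> = (n + Suc j) choose Suc j"
    using binomial_symmetric[of n "Suc (j + n)"] by (simp add: add_ac)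
  finally show ?case .
qed (simp add: inverse_one_minus_fps_X)

lemma has_asymp_expansion_minus_ln_one_minus:
  "has_asymp_expansion (\<lambda>z. - ln (1 - z)) (fps_integral (inverse (1 - fps_X)) 0)"
proof (rule has_asymp_expansion_integral[where \<delta> = 1])
  show "has_asymp_expansion (\<lambda>z. inverse (1 - z)) (inverse (1 - fps_X))"
    using has_asymp_expansion_inverse[OF has_asymp_expansion_diff[OF has_asymp_expansion_const
          has_asymp_expansion_ident, of 1]] by simp
  show "((\<lambda>z. - ln (1 - z)) \<longlongrightarrow> 0) (at_right (0::real))"
    by (rule tendsto_eq_intros refl | simp)+
  fix z :: real assume "0 < z" "z < 1"
  thus "((\<lambda>z. - ln (1 - z)) has_real_derivative inverse (1 - z)) (at z)"
    by (auto intro!: derivative_eq_intros simp: field_simps)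
qed simp

text \<open>The substitution \<open>t = z / (1 - z)\<^sup>2\<close> turns \<open>1/t + l\<close> into \<open>z + 1/z + l - 2\<close>.\<close>

definition koebe :: "real \<Rightarrow> real" where
  "koebe z = z / (1 - z)^2"

definition koebe_fps :: "real fps" where
  "koebe_fps = fps_X * inverse ((1 - fps_X)^2)"

lemma has_asymp_expansion_koebe: "has_asymp_expansion koebe koebe_fps"
proof -
  have "has_asymp_expansion (\<lambda>t. t * inverse ((1 - t)^2)) (fps_X * inverse ((fps_const 1 - fps_X)^2))"
    by (intro has_asymp_expansion_mult has_asymp_expansion_ident has_asymp_expansion_inverse
        has_asymp_expansion_power has_asymp_expansion_diff has_asymp_expansion_const)
       (simp add: fps_nth_power_0)
  thus ?thesis unfolding koebe_def koebe_fps_def by (simp add: divide_inverse)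
qed

lemma fps_nth_koebe_fps_0 [simp]: "fps_nth koebe_fps 0 = 0"
  by (simp add: koebe_fps_def)

lemma filterlim_koebe: "filterlim koebe (at_right 0) (at_right 0)"
proof -
  have "(koebe \<longlongrightarrow> 0) (at_right 0)" unfolding koebe_def by (auto intro!: tendsto_eq_intros)
  moreover have "eventually (\<lambda>t. koebe t \<in> {0<..}) (at_right (0::real))"
    by (auto simp: eventually_at_right_field koebe_def intro!: exI[of _ 1])
  ultimately show ?thesis by (auto simp: filterlim_at elim: eventually_mono)
qed

lemma fps_nth_koebe_fps_power:
  assumes "1 \<le> r" "r \<le> n"
  shows "fps_nth (koebe_fps ^ r) n = real ((n + r - 1) choose (2 * r - 1))"
proof -
  have r: "Suc (2 * r - 1) = 2 * r" using assms by simp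
  have "koebe_fps ^ r = fps_X ^ r * inverse (1 - fps_X) ^ (2 * r)"
    by (simp add: koebe_fps_def power_mult_distrib power_mult fps_inverse_power)
  hence "fps_nth (koebe_fps ^ r) n = fps_nth (inverse (1 - fps_X) ^ Suc (2 * r - 1)) (n - r)"
    using assms by (simp add: fps_X_power_mult_nth r)
  also have "\<dots> = real ((n - r + (2 * r - 1)) choose (2 * r - 1))"
    by (rule fps_nth_inverse_one_minus_fps_X_power)
  also have "n - r + (2 * r - 1) = n + r - 1" using assms by simp
  finally show ?thesis .
qed

lemma fps_nth_oo_koebe_fps:
  assumes "n \<ge> 1"
  shows "fps_nth (F oo koebe_fps) n = (\<Sum>r=1..n. fps_nth F r * real ((n + r - 1) choose (2 * r - 1)))"
proof -
  have "fps_nth (F oo koebe_fps) n = fps_nth F 0 * fps_nth (koebe_fps ^ 0) n +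
          (\<Sum>r=1..n. fps_nth F r * fps_nth (koebe_fps ^ r) n)"
    by (simp add: fps_compose_nth sum.atLeast_Suc_atMost)
  thus ?thesis using assms by (simp add: fps_nth_koebe_fps_power)
qed

lemma norlund_0: "norlund l 0 = 1"
  by (simp add: norlund_eq_bernoulli_fps_power fps_nth_power_0)

lemma binomial_divide_eq:
  assumes "0 < k" "0 < n"
  shows "real (n choose k) / real n = real ((n - 1) choose (k - 1)) / real k"
proof -
  have "real k * real (n choose k) = real n * real ((n - 1) choose (k - 1))"
    using times_binomial_minus1_eq[OF assms(1), of n] by (metis of_nat_mult)
  thus ?thesis using assms by (simp add: field_simps)
qed

lemma norlund_star_eq:
  assumes "n \<ge> 1"
  shows "norlund_star (Suc k) n = 1 / real n - fps_nth (gchoose_Digamma_log_fps k oo koebe_fps) n / 2"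
proof -
  have "norlund_star (Suc k) n = 1 / real n +
          (\<Sum>r=1..n. norlund (Suc k) r * (real ((n + r) choose (2 * r)) / real (n + r)))"
    unfolding norlund_star_def by (subst sum.atLeast_Suc_atMost) (simp_all add: norlund_0 ac_simps)
  also have "(\<Sum>r=1..n. norlund (Suc k) r * (real ((n + r) choose (2 * r)) / real (n + r))) =
             (\<Sum>r=1..n. - (- norlund (Suc k) r / real r * real ((n + r - 1) choose (2 * r - 1))) / 2)"
  proof (intro sum.cong refl)
    fix r assume r: "r \<in> {1..n}"
    hence "real ((n + r) choose (2 * r)) / real (n + r) = real ((n + r - 1) choose (2 * r - 1)) / real (2 * r)"
      by (intro binomial_divide_eq) auto
    thus "norlund (Suc k) r * (real ((n + r) choose (2 * r)) / real (n + r)) =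
          - (- norlund (Suc k) r / real r * real ((n + r - 1) choose (2 * r - 1))) / 2"
      by simp
  qed
  also have "\<dots> = - fps_nth (gchoose_Digamma_log_fps k oo koebe_fps) n / 2"
    using assms by (simp add: fps_nth_oo_koebe_fps fps_nth_gchoose_Digamma_log_fps sum_divide_distrib sum_negf)
  finally show ?thesis by simp
qed

lemma rhs_fun_eq:
  assumes "0 < z" "z < 1"
  shows "rhs_fun (Suc k) z = harm k / 2
           - ((deriv ^^ k) (gchoose_Digamma (Suc k)) (1 / koebe z + real (Suc k)) + ln (koebe z)) / 2
           - ln (1 - z)"
proof -
  have x: "1 / koebe z + real (Suc k) = z + 1 / z + real (Suc k) - 2"
    using assms by (simp add: koebe_def field_simps power2_eq_square)
  have "1 < 1 / z" using assms by simp
  hence "real k < z + 1 / z + real (Suc k) - 2" using assms by linarith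
  hence "(deriv ^^ k) (\<lambda>x. ((x - 1) gchoose k) * Digamma (x - real (Suc k div 2))) (z + 1 / z + real (Suc k) - 2)
      = (deriv ^^ k) (gchoose_Digamma (Suc k)) (z + 1 / z + real (Suc k) - 2)"
    by (intro higher_deriv_gchoose_mult_Digamma_shift) simp_all
  hence "rhs_fun (Suc k) z = - ln z / 2 + (harm k - (deriv ^^ k) (gchoose_Digamma (Suc k)) (z + 1 / z + real (Suc k) - 2)) / 2"
    unfolding rhs_fun_def by (simp only: diff_Suc_1)
  moreover have "ln (koebe z) = ln z - 2 * ln (1 - z)"
    using assms by (simp add: koebe_def ln_div ln_realpow)
  ultimately show ?thesis unfolding x by (simp add: field_simps)
qed

lemma has_asymp_expansion_rhs_fun:
  "has_asymp_expansion (rhs_fun (Suc k)) (Abs_fps (\<lambda>n. if n = 0 then 0 else norlund_star (Suc k) n))"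
proof -
  let ?D = "\<lambda>t. (deriv ^^ k) (gchoose_Digamma (Suc k)) (1 / t + real (Suc k)) + ln t"
  have "has_asymp_expansion (\<lambda>z. ?D (koebe z)) (gchoose_Digamma_log_fps k oo koebe_fps)"
    by (rule has_asymp_expansion_compose[OF has_asymp_expansion_higher_deriv_gchoose_Digamma_plus_ln
          has_asymp_expansion_koebe fps_nth_koebe_fps_0 filterlim_koebe])
  hence expansion: "has_asymp_expansion (\<lambda>z. harm k / 2 - (1/2) * ?D (koebe z) + - ln (1 - z))
          (fps_const (harm k / 2) - fps_const (1/2) * (gchoose_Digamma_log_fps k oo koebe_fps)
           + fps_integral (inverse (1 - fps_X)) 0)"
    by (rule has_asymp_expansion_add[OF has_asymp_expansion_diff[OF has_asymp_expansion_const
          has_asymp_expansion_cmult] has_asymp_expansion_minus_ln_one_minus])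
  have eventually_eq: "eventually (\<lambda>z. harm k / 2 - (1/2) * ?D (koebe z) + - ln (1 - z) = rhs_fun (Suc k) z) (at_right 0)"
  proof -
    have "eventually (\<lambda>z::real. 0 < z \<and> z < 1) (at_right 0)"
      by (auto simp: eventually_at_right_field intro!: exI[of _ 1])
    thus ?thesis by eventually_elim (simp add: rhs_fun_eq)
  qed
  have coeffs: "fps_const (harm k / 2) - fps_const (1/2) * (gchoose_Digamma_log_fps k oo koebe_fps)
           + fps_integral (inverse (1 - fps_X)) 0 = Abs_fps (\<lambda>n. if n = 0 then 0 else norlund_star (Suc k) n)"
  proof (rule fps_ext)
    fix n
    show "fps_nth (fps_const (harm k / 2) - fps_const (1/2) * (gchoose_Digamma_log_fps k oo koebe_fps)
           + fps_integral (inverse (1 - fps_X)) 0) n = fps_nth (Abs_fps (\<lambda>n. if n = 0 then 0 else norlund_star (Suc k) n)) n"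
    proof (cases n)
      case (Suc m)
      have "fps_nth (fps_integral (inverse (1 - fps_X)) 0) n = 1 / real n"
        by (simp add: Suc inverse_one_minus_fps_X divide_inverse)
      thus ?thesis using norlund_star_eq[of n k] Suc by simp
    qed (simp add: fps_nth_gchoose_Digamma_log_fps_0)
  qed
  from has_asymp_expansion_cong[OF expansion eventually_eq] show ?thesis unfolding coeffs .
qed

theorem theorem1p2:
  fixes l :: nat
  assumes "l \<ge> 1"
  shows "\<forall>N::nat. (\<lambda>z. rhs_fun l z - (\<Sum>n=1..N. norlund_star l n * z ^ n))
            \<in> O[at_right 0](\<lambda>z. z ^ (N + 1))"
proof
  fix N :: nat
  obtain k where l: "l = Suc k" using assms by (cases l) auto
  have "\<forall>n\<le>N. coeff (\<Sum>n=1..N. monom (norlund_star l n) n) n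
                = fps_nth (Abs_fps (\<lambda>n. if n = 0 then 0 else norlund_star l n)) n"
    by (auto simp: coeff_sum)
  from has_asymp_expansionD[OF has_asymp_expansion_rhs_fun[of k, folded l] this]
  show "(\<lambda>z. rhs_fun l z - (\<Sum>n=1..N. norlund_star l n * z ^ n)) \<in> O[at_right 0](\<lambda>z. z ^ (N + 1))"
    by (simp add: poly_sum poly_monom)
qed

end
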